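(* Let $\mathbf F$ be a Baire foliage tree on a space $X$ and let $\varphi$ be a consistent family of foliage grafts for $\mathbf F$ such that every $\mathbf G\in\varphi$ is $\aleph_0$-branching, locally strict, open in $X$, has bounded chains, and has $\mathrm{height}\,\mathbf G\le\omega$. Then $\mathrm{fhybr}(\mathbf F,\varphi)$ is a Baire foliage tree on the subspace $X\setminus\mathrm{loss}(\mathbf F,\varphi)$ of $X$.
   Context: Trees: a tree is a pair $(Q,<)$ with $<$ irreflexive transitive and predecessor sets well-ordered; $\parallel$ = incomparable; $\mathrm{sons}(x)$ = immediate successors; $\max$ = maximal nodes; $0$ = least node; a branch is a maximal chain; bounded chains: every nonempty chain has an upper-bound node; $\kappa$-branching: every non-maximal node has exactly $\kappa$ sons; height of the tree = least ordinal $\beta$ with no node whose predecessor set has order type $\beta$; $A{\downarrow}=\{v:\exists a\in A\ a\le v\}$; for an antichain $A$ and $x\in A{\downarrow}$, $\mathrm{root}(x,A)$ is the unique $r\in A$, $r\le x$. A graft for a tree $\mathcal T$ is a tree $\mathcal G$ with more than one node, least node $0_{\mathcal G}\in\mathrm{nodes}\,\mathcal T$, $\max\mathcal G\subseteq\{v\in\mathrm{nodes}\,\mathcal T:v>_{\mathcal T}0_{\mathcal G}\}$ an antichain in $\mathcal T$, and $\mathrm{impl}\,\mathcal G:=\mathrm{nodes}\,\mathcal G\setminus(\{0_{\mathcal G}\}\cup\max\mathcal G)$ disjoint from $\mathrm{nodes}\,\mathcal T$; $\mathrm{expl}(\mathcal T,\mathcal G)=\{v:v>_{\mathcal T}0_{\mathcal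 G}\}\setminus(\max\mathcal G){\downarrow}_{\mathcal T}$. A consistent family $\gamma$ of grafts for $\mathcal T$: members are grafts with pairwise disjoint implants and for distinct $\mathcal D,\mathcal E$: $0_{\mathcal D}\parallel_{\mathcal T}0_{\mathcal E}$ or $0_{\mathcal D}\in(\max\mathcal E){\downarrow}_{\mathcal T}$ or $0_{\mathcal E}\in(\max\mathcal D){\downarrow}_{\mathcal T}$. $\mathrm{supp}(\mathcal T,\gamma)=\mathrm{nodes}\,\mathcal T\setminus\bigcup_{\mathcal G\in\gamma}\mathrm{expl}(\mathcal T,\mathcal G)$. $\mathrm{hybr}(\mathcal T,\gamma)$ is the tree on $\mathrm{supp}(\mathcal T,\gamma)\cup\bigcup_{\mathcal G\in\gamma}\mathrm{impl}\,\mathcal G$ with $x<y$ iff: (b1) $x,y\in\mathrm{supp}$, $x<_{\mathcal T}y$; (b2) $x,y\in\mathrm{impl}\,\mathcal G$, $x<_{\mathcal G}y$; (b3) $x\in\mathrm{supp}$, $y\in\mathrm{impl}\,\mathcal G$, $x\le_{\mathcal T}0_{\mathcal G}$; (b4) $x\in\mathrm{impl}\,\mathcal G$, $y\in\mathrm{supp}\cap(\max\mathcal G){\downarrow}_{\mathcal T}$, $x<_{\mathcal G}\mathrm{root}_{\mathcal T}(y,\max\mathcal G)$; or (b5) $x\in\mathrm{impl}\,\mathcal D$, $y\in\mathrm{impl}\,\mathcal E$ ($\mathcal D\ne\mathcal E$), $0_{\mathcal E}\in(\max\mathcal D){\downarrow}_{\mathcal T}$, $x<_{\mathcal D}\mathrm{root}_{\mathcal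 T}(0_{\mathcal E},\max\mathcal D)$. Foliage trees: $\mathbf F=(\mathcal T,l)$, skeleton $\mathrm{skel}\,\mathbf F=\mathcal T$, leaves $\mathbf F_x=l(x)$; tree notions refer to the skeleton; $\mathrm{fruit}_{\mathbf F}(A)=\bigcap_{x\in A}\mathbf F_x$. Nonincreasing: $x\le y\Rightarrow\mathbf F_y\subseteq\mathbf F_x$; locally strict: each non-maximal $\mathbf F_x$ is the union of the pairwise disjoint family $(\mathbf F_s)_{s\in\mathrm{sons}(x)}$; strict branches: has a node and every branch has singleton fruit; open in $X$: all leaves open. A Baire foliage tree on $X$ is a foliage tree with skeleton isomorphic to $(\omega^{<\omega},\subsetneq)$, open in $X$, locally strict, with strict branches, and leaf at the least node equal to $X$. A foliage graft for a nonincreasing $\mathbf F$ is a nonincreasing foliage tree $\mathbf G$ with $\mathrm{skel}\,\mathbf G$ a graft for $\mathrm{skel}\,\mathbf F$, $\mathbf G_{0_{\mathbf G}}\subseteq\mathbf F_{0_{\mathbf G}}$, and $\mathbf G_m=\mathbf F_m$ for $m\in\max\mathbf G$; $\mathrm{cut}(\mathbf F,\mathbf G)=\mathbf F_{0_{\mathbf G}}\setminus\mathbf G_{0_{\mathbf G}}$. $\varphi$ is a consistent family of foliage grafts for $\mathbf F$ if its members are foliage grafts for $\mathbf F$ with pairwise distinct skeletons forming a consistent family of grafts for $\mathrm{skel}\,\mathbf F$; $\mathrm{loss}(\mathbf F,\varphi)=\bigcup_{\mathbf G\in\varphi}\mathrm{cut}(\mathbf F,\mathbf G)$; $\mathrm{supp}(\mathbf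 F,\varphi)$ is the support of $\mathrm{skel}\,\mathbf F$ for the skeletons. $\mathrm{fhybr}(\mathbf F,\varphi)$ is the foliage tree $\mathbf H$ with skeleton $\mathrm{hybr}(\mathrm{skel}\,\mathbf F,\{\mathrm{skel}\,\mathbf G:\mathbf G\in\varphi\})$ and leaves $\mathbf H_x=\mathbf G_x\setminus\mathrm{loss}(\mathbf F,\varphi)$ for $x\in\mathrm{impl}\,\mathbf G$, $\mathbf H_x=\mathbf F_x\setminus\mathrm{loss}(\mathbf F,\varphi)$ for $x\in\mathrm{supp}(\mathbf F,\varphi)$. (A Baire foliage tree is nonincreasing, so the foliage grafts make sense.) *)

theory Defs
  imports "HOL-Analysis.Analysis" "HOL-Library.Sublist" "HOL-Library.Disjoint_Sets"
begin

text \<open>A tree is represented as a pair (set of nodes, strict order relation).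
  All trees (skeletons, grafts, hybrids) live over the same node type 'a.\<close>

type_synonym 'a tree = "'a set \<times> ('a \<Rightarrow> 'a \<Rightarrow> bool)"

definition nodes :: "'a tree \<Rightarrow> 'a set" where "nodes T = fst T"
definition tlt :: "'a tree \<Rightarrow> 'a \<Rightarrow> 'a \<Rightarrow> bool" where "tlt T = snd T"
definition tle :: "'a tree \<Rightarrow> 'a \<Rightarrow> 'a \<Rightarrow> bool" where
  "tle T x y \<longleftrightarrow> x = y \<or> tlt T x y"

definition preds :: "'a tree \<Rightarrow> 'a \<Rightarrow> 'a set" where
  "preds T x = {y. tlt T y x}"

definition is_tree :: "'a tree \<Rightarrow> bool" where
  "is_tree T \<longleftrightarrow>
     (\<forall>x y. tlt T x y \<longrightarrow> x \<in> nodes T \<and> y \<in> nodes T) \<and>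
     (\<forall>x. \<not> tlt T x x) \<and>
     (\<forall>x y z. tlt T x y \<longrightarrow> tlt T y z \<longrightarrow> tlt T x z) \<and>
     (\<forall>x\<in>nodes T.
        (\<forall>y\<in>preds T x. \<forall>z\<in>preds T x. y = z \<or> tlt T y z \<or> tlt T z y) \<and>
        (\<forall>S. S \<subseteq> preds T x \<longrightarrow> S \<noteq> {} \<longrightarrow> (\<exists>m\<in>S. \<forall>s\<in>S. \<not> tlt T s m)))"

definition incomp :: "'a tree \<Rightarrow> 'a \<Rightarrow> 'a \<Rightarrow> bool" where
  "incomp T x y \<longleftrightarrow> \<not> tle T x y \<and> \<not> tle T y x"

definition sons :: "'a tree \<Rightarrow> 'a \<Rightarrow> 'a set" where
  "sons T x = {y \<in> nodes T. tlt T x y \<and> \<not> (\<exists>z. tlt T x z \<and> tlt T z y)}"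

definition maxs :: "'a tree \<Rightarrow> 'a set" where
  "maxs T = {x \<in> nodes T. \<not> (\<exists>y. tlt T x y)}"

definition has_least :: "'a tree \<Rightarrow> bool" where
  "has_least T \<longleftrightarrow> (\<exists>r\<in>nodes T. \<forall>y\<in>nodes T. tle T r y)"

definition zero :: "'a tree \<Rightarrow> 'a" where
  "zero T = (THE r. r \<in> nodes T \<and> (\<forall>y\<in>nodes T. tle T r y))"

definition is_chain :: "'a tree \<Rightarrow> 'a set \<Rightarrow> bool" where
  "is_chain T C \<longleftrightarrow> C \<subseteq> nodes T \<and> (\<forall>x\<in>C. \<forall>y\<in>C. tle T x y \<or> tle T y x)"

definition is_branch :: "'a tree \<Rightarrow> 'a set \<Rightarrow> bool" where
  "is_branch T B \<longleftrightarrow> is_chain T B \<and> (\<forall>C. is_chain T C \<longrightarrow> B \<subseteq> C \<longrightarrow> C = B)"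

definition is_antichain :: "'a tree \<Rightarrow> 'a set \<Rightarrow> bool" where
  "is_antichain T A \<longleftrightarrow> A \<subseteq> nodes T \<and> (\<forall>x\<in>A. \<forall>y\<in>A. x \<noteq> y \<longrightarrow> incomp T x y)"

definition bounded_chains :: "'a tree \<Rightarrow> bool" where
  "bounded_chains T \<longleftrightarrow>
     (\<forall>C. is_chain T C \<longrightarrow> C \<noteq> {} \<longrightarrow> (\<exists>u\<in>nodes T. \<forall>c\<in>C. tle T c u))"

definition aleph0_branching :: "'a tree \<Rightarrow> bool" where
  "aleph0_branching T \<longleftrightarrow>
     (\<forall>x\<in>nodes T - maxs T. sons T x \<approx> (UNIV :: nat set))"

definition pred_order :: "'a tree \<Rightarrow> 'a \<Rightarrow> 'a rel" where
  "pred_order T x = {(y, z). y \<in> preds T x \<and> z \<in> preds T x \<and> tle T y z}"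

text \<open>height T \<le> omega, where height T is the least ordinal beta such that no node
  has predecessor set of order type beta. Since ordinals \<le> omega are exactly the
  order types of well-orders on subsets of nat that embed into natLeq, this says:
  some ordinal beta \<le> omega is not the order type of any predecessor set.\<close>
definition height_le_omega :: "'a tree \<Rightarrow> bool" where
  "height_le_omega T \<longleftrightarrow>
     (\<exists>\<beta> :: nat rel. Well_order \<beta> \<and> (\<beta>, natLeq) \<in> ordLeq \<and>
        (\<forall>x\<in>nodes T. (pred_order T x, \<beta>) \<notin> ordIso))"

definition down :: "'a tree \<Rightarrow> 'a set \<Rightarrow> 'a set" where
  "down T A = {v. \<exists>a\<in>A. tle T a v}"

definition troot :: "'a tree \<Rightarrow> 'a \<Rightarrow> 'a set \<Rightarrow> 'a" where
  "troot T x A = (THE r. r \<in> A \<and> tle T r x)"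

definition impl :: "'a tree \<Rightarrow> 'a set" where
  "impl G = nodes G - ({zero G} \<union> maxs G)"

definition is_graft :: "'a tree \<Rightarrow> 'a tree \<Rightarrow> bool" where
  "is_graft T G \<longleftrightarrow>
     is_tree G \<and> (\<exists>a\<in>nodes G. \<exists>b\<in>nodes G. a \<noteq> b) \<and>
     has_least G \<and> zero G \<in> nodes T \<and>
     maxs G \<subseteq> {v \<in> nodes T. tlt T (zero G) v} \<and>
     is_antichain T (maxs G) \<and>
     impl G \<inter> nodes T = {}"

definition expl :: "'a tree \<Rightarrow> 'a tree \<Rightarrow> 'a set" where
  "expl T G = {v. tlt T (zero G) v} - down T (maxs G)"

definition consistent_grafts :: "'a tree \<Rightarrow> 'a tree set \<Rightarrow> bool" where
  "consistent_grafts T \<gamma> \<longleftrightarrow>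
     (\<forall>G\<in>\<gamma>. is_graft T G) \<and>
     (\<forall>D\<in>\<gamma>. \<forall>E\<in>\<gamma>. D \<noteq> E \<longrightarrow>
        impl D \<inter> impl E = {} \<and>
        (incomp T (zero D) (zero E) \<or> zero D \<in> down T (maxs E) \<or> zero E \<in> down T (maxs D)))"

definition supp :: "'a tree \<Rightarrow> 'a tree set \<Rightarrow> 'a set" where
  "supp T \<gamma> = nodes T - (\<Union>G\<in>\<gamma>. expl T G)"

definition hybr :: "'a tree \<Rightarrow> 'a tree set \<Rightarrow> 'a tree" where
  "hybr T \<gamma> =
    (supp T \<gamma> \<union> (\<Union>G\<in>\<gamma>. impl G),
     \<lambda>x y.
       (x \<in> supp T \<gamma> \<and> y \<in> supp T \<gamma> \<and> tlt T x y) \<or>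
       (\<exists>G\<in>\<gamma>. x \<in> impl G \<and> y \<in> impl G \<and> tlt G x y) \<or>
       (\<exists>G\<in>\<gamma>. x \<in> supp T \<gamma> \<and> y \<in> impl G \<and> tle T x (zero G)) \<or>
       (\<exists>G\<in>\<gamma>. x \<in> impl G \<and> y \<in> supp T \<gamma> \<and> y \<in> down T (maxs G) \<and>
                tlt G x (troot T y (maxs G))) \<or>
       (\<exists>D\<in>\<gamma>. \<exists>E\<in>\<gamma>. D \<noteq> E \<and> x \<in> impl D \<and> y \<in> impl E \<and>
                zero E \<in> down T (maxs D) \<and> tlt D x (troot T (zero E) (maxs D))))"

type_synonym ('a, 'b) ftree = "'a tree \<times> ('a \<Rightarrow> 'b set)"

definition skel :: "('a, 'b) ftree \<Rightarrow> 'a tree" where "skel F = fst F"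
definition leaf :: "('a, 'b) ftree \<Rightarrow> 'a \<Rightarrow> 'b set" where "leaf F = snd F"

definition is_ftree :: "('a, 'b) ftree \<Rightarrow> bool" where
  "is_ftree F \<longleftrightarrow> is_tree (skel F)"

definition fruit :: "('a, 'b) ftree \<Rightarrow> 'a set \<Rightarrow> 'b set" where
  "fruit F A = (\<Inter>x\<in>A. leaf F x)"

definition nonincreasing :: "('a, 'b) ftree \<Rightarrow> bool" where
  "nonincreasing F \<longleftrightarrow>
     (\<forall>x\<in>nodes (skel F). \<forall>y\<in>nodes (skel F). tle (skel F) x y \<longrightarrow> leaf F y \<subseteq> leaf F x)"

definition locally_strict :: "('a, 'b) ftree \<Rightarrow> bool" where
  "locally_strict F \<longleftrightarrow>
     (\<forall>x\<in>nodes (skel F) - maxs (skel F).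
        disjoint_family_on (leaf F) (sons (skel F) x) \<and>
        leaf F x = (\<Union>s\<in>sons (skel F) x. leaf F s))"

definition strict_branches :: "('a, 'b) ftree \<Rightarrow> bool" where
  "strict_branches F \<longleftrightarrow>
     nodes (skel F) \<noteq> {} \<and>
     (\<forall>B. is_branch (skel F) B \<longrightarrow> (\<exists>p. fruit F B = {p}))"

definition open_in :: "'b topology \<Rightarrow> ('a, 'b) ftree \<Rightarrow> bool" where
  "open_in X F \<longleftrightarrow> (\<forall>x\<in>nodes (skel F). openin X (leaf F x))"

definition baire_skeleton :: "'a tree \<Rightarrow> bool" where
  "baire_skeleton T \<longleftrightarrow>
     (\<exists>f :: 'a \<Rightarrow> nat list. bij_betw f (nodes T) UNIV \<and>
        (\<forall>x\<in>nodes T. \<forall>y\<in>nodes T. tlt T x y \<longleftrightarrow> strict_prefix (f x) (f y)))"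

definition baire_ftree :: "'b topology \<Rightarrow> ('a, 'b) ftree \<Rightarrow> bool" where
  "baire_ftree X F \<longleftrightarrow>
     is_ftree F \<and> baire_skeleton (skel F) \<and> open_in X F \<and> locally_strict F \<and>
     strict_branches F \<and> leaf F (zero (skel F)) = topspace X"

definition is_fgraft :: "('a, 'b) ftree \<Rightarrow> ('a, 'b) ftree \<Rightarrow> bool" where
  "is_fgraft F G \<longleftrightarrow>
     is_ftree G \<and> nonincreasing G \<and> is_graft (skel F) (skel G) \<and>
     leaf G (zero (skel G)) \<subseteq> leaf F (zero (skel G)) \<and>
     (\<forall>m\<in>maxs (skel G). leaf G m = leaf F m)"

definition cut :: "('a, 'b) ftree \<Rightarrow> ('a, 'b) ftree \<Rightarrow> 'b set" where
  "cut F G = leaf F (zero (skel G)) - leaf G (zero (skel G))"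

definition consistent_fgrafts :: "('a, 'b) ftree \<Rightarrow> ('a, 'b) ftree set \<Rightarrow> bool" where
  "consistent_fgrafts F \<phi> \<longleftrightarrow>
     (\<forall>G\<in>\<phi>. is_fgraft F G) \<and> inj_on skel \<phi> \<and> consistent_grafts (skel F) (skel ` \<phi>)"

definition loss :: "('a, 'b) ftree \<Rightarrow> ('a, 'b) ftree set \<Rightarrow> 'b set" where
  "loss F \<phi> = (\<Union>G\<in>\<phi>. cut F G)"

definition fsupp :: "('a, 'b) ftree \<Rightarrow> ('a, 'b) ftree set \<Rightarrow> 'a set" where
  "fsupp F \<phi> = supp (skel F) (skel ` \<phi>)"

definition fhybr :: "('a, 'b) ftree \<Rightarrow> ('a, 'b) ftree set \<Rightarrow> ('a, 'b) ftree" where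
  "fhybr F \<phi> =
    (hybr (skel F) (skel ` \<phi>),
     \<lambda>x. if x \<in> fsupp F \<phi> then leaf F x - loss F \<phi>
         else leaf (THE G. G \<in> \<phi> \<and> x \<in> impl (skel G)) x - loss F \<phi>)"

end

theory Submission
  imports Defs
begin

text \<open>The hybrid order agrees with that of \<open>T\<close> on the support and with that of each graft on
  the graft's nodes, an implant node lying between its graft's root and the support nodes above
  the graft's maximal nodes it precedes.  This makes the hybrid a tree whose predecessor sets are
  finite (height at most \<open>\<omega>\<close> gives this for the grafts).  Sons are computed locally: at an
  inner node of a graft they are its sons in the graft, at any other support node its sons in
  \<open>T\<close>, so the hybrid is rooted and \<open>\<aleph>\<^sub>0\<close>-branching, i.e. again a Baire skeleton; local
  strictness and openness pass to the hybrid leaves.  A branch cannot end inside an implant, as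
  its part there is a chain of the graft, bounded and hence finite.  So every branch meets the
  support cofinally; the downward closure of this trace is a branch of \<open>T\<close>, and the point of
  its fruit is not lost (a lost point in the cut of a graft would have to lie in a leaf of a
  maximal node of that graft, which is contained in the graft's root leaf) and is the only point
  of the branch's fruit in the hybrid.\<close>

section \<open>Trees\<close>

lemma tree_lt_field:
  assumes "is_tree T" "tlt T x y" shows "x \<in> nodes T" "y \<in> nodes T"
  using assms unfolding is_tree_def by simp_all

lemma tree_lt_irrefl: "is_tree T \<Longrightarrow> \<not> tlt T x x"
  unfolding is_tree_def by simp

lemma tree_lt_trans: "is_tree T \<Longrightarrow> tlt T x y \<Longrightarrow> tlt T y z \<Longrightarrow> tlt T x z"
  unfolding is_tree_def by metis

lemma tree_lt_asym: "is_tree T \<Longrightarrow> tlt T x y \<Longrightarrow> \<not> tlt T y x"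
  using tree_lt_irrefl tree_lt_trans by metis

lemma tree_le_trans:
  assumes "is_tree T" "tle T x y" "tle T y z" shows "tle T x z"
  using assms(2,3) tree_lt_trans[OF assms(1), of x y z] unfolding tle_def by auto

lemma tree_le_lt_trans:
  assumes "is_tree T" "tle T x y" "tlt T y z" shows "tlt T x z"
  using assms(2,3) tree_lt_trans[OF assms(1), of x y z] unfolding tle_def by auto

lemma tree_lt_le_trans:
  assumes "is_tree T" "tlt T x y" "tle T y z" shows "tlt T x z"
  using assms(2,3) tree_lt_trans[OF assms(1), of x y z] unfolding tle_def by auto

lemma tree_le_antisym:
  assumes "is_tree T" "tle T x y" "tle T y x" shows "x = y"
  using assms(2,3) tree_lt_asym[OF assms(1), of x y] unfolding tle_def by auto

lemma tree_lt_linear_below: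
  assumes T: "is_tree T" and "tlt T a x" "tlt T b x"
  shows "a = b \<or> tlt T a b \<or> tlt T b a"
proof -
  have "\<forall>y\<in>preds T x. \<forall>z\<in>preds T x. y = z \<or> tlt T y z \<or> tlt T z y"
    using T tree_lt_field[OF T assms(2)] unfolding is_tree_def by simp
  then show ?thesis using assms(2,3) unfolding preds_def by simp
qed

lemma tree_le_linear_below:
  assumes T: "is_tree T" and "tle T a x" "tle T b x"
  shows "tle T a b \<or> tle T b a"
  using assms(2,3) tree_lt_linear_below[OF T, of a x b] unfolding tle_def by auto

lemma tree_preds_wf:
  assumes T: "is_tree T" and "x \<in> nodes T" "S \<subseteq> preds T x" "S \<noteq> {}"
  shows "\<exists>m\<in>S. \<forall>s\<in>S. \<not> tlt T s m"
proof -
  have "\<forall>S. S \<subseteq> preds T x \<longrightarrow> S \<noteq> {} \<longrightarrow> (\<exists>m\<in>S. \<forall>s\<in>S. \<not> tlt T s m)"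
    using T assms(2) unfolding is_tree_def by simp
  then show ?thesis using assms(3,4) by simp
qed

lemma tree_preds_mono:
  assumes "is_tree T" "tlt T y x" shows "preds T y \<subseteq> preds T x"
  unfolding preds_def using tree_lt_trans[OF assms(1) _ assms(2)] by blast

lemma zero_eqI:
  assumes T: "is_tree T" and r: "r \<in> nodes T" "\<forall>y\<in>nodes T. tle T r y"
  shows "zero T = r"
  unfolding zero_def
proof (rule the_equality)
  show "r \<in> nodes T \<and> (\<forall>y\<in>nodes T. tle T r y)" using r by simp
  fix r' assume "r' \<in> nodes T \<and> (\<forall>y\<in>nodes T. tle T r' y)"
  then show "r' = r" using r tree_le_antisym[OF T, of r' r] by simp
qed

lemma zero_least:
  assumes T: "is_tree T" and "has_least T"
  shows "zero T \<in> nodes T" "y \<in> nodes T \<Longrightarrow> tle T (zero T) y"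
proof -
  obtain r where "r \<in> nodes T" "\<forall>y\<in>nodes T. tle T r y"
    using assms(2) unfolding has_least_def by blast
  moreover have "zero T = r" using zero_eqI[OF T] calculation by simp
  ultimately show "zero T \<in> nodes T" "y \<in> nodes T \<Longrightarrow> tle T (zero T) y" by simp_all
qed

lemma sonsI:
  "y \<in> nodes T \<Longrightarrow> tlt T x y \<Longrightarrow> (\<And>w. tlt T x w \<Longrightarrow> tlt T w y \<Longrightarrow> False) \<Longrightarrow> y \<in> sons T x"
  unfolding sons_def by blast

lemma sonsD:
  "y \<in> sons T x \<Longrightarrow> y \<in> nodes T \<and> tlt T x y \<and> (\<forall>w. tlt T x w \<longrightarrow> \<not> tlt T w y)"
  unfolding sons_def by blast

lemma sons_eq_if_le_common:
  assumes T: "is_tree T" and s: "s1 \<in> sons T p" "s2 \<in> sons T p" and "tle T s1 w" "tle T s2 w"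
  shows "s1 = s2"
proof -
  have "\<not> tlt T s1 s2" "\<not> tlt T s2 s1" using sonsD[OF s(1)] sonsD[OF s(2)] by blast+
  moreover have "tle T s1 s2 \<or> tle T s2 s1" using tree_le_linear_below[OF T assms(4,5)] .
  ultimately show ?thesis unfolding tle_def by auto
qed

lemma maxsD: "m \<in> maxs T \<Longrightarrow> m \<in> nodes T \<and> \<not> (\<exists>y. tlt T m y)"
  unfolding maxs_def by blast

lemma finite_linear_has_greatest:
  assumes "finite S" "S \<noteq> {}" "\<And>x y z. R x y \<Longrightarrow> R y z \<Longrightarrow> R x z"
    "\<And>x y. x \<in> S \<Longrightarrow> y \<in> S \<Longrightarrow> x = y \<or> R x y \<or> R y x"
  shows "\<exists>m\<in>S. \<forall>s\<in>S. s = m \<or> R s m"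
  using assms(1,2,4)
proof (induction S rule: finite_ne_induct)
  case (insert x F)
  then obtain m where m: "m \<in> F" "\<forall>s\<in>F. s = m \<or> R s m" by auto
  consider "x = m \<or> R x m" | "R m x" using insert.prems m(1) by auto
  then show ?case
  proof cases
    case 1 then show ?thesis using m by auto
  next
    case 2
    have "s = x \<or> R s x" if "s \<in> F" for s
      using m(2) that assms(3)[of s m x] 2 by auto
    then show ?thesis by auto
  qed
qed simp

lemma finite_strict_order_has_minimal:
  assumes "finite S" "S \<noteq> {}" "\<And>x. \<not> R x x" "\<And>x y z. R x y \<Longrightarrow> R y z \<Longrightarrow> R x z"
  shows "\<exists>m\<in>S. \<forall>s\<in>S. \<not> R s m"
  using assms(1,2)
proof (induction S rule: finite_ne_induct)
  case (insert x F)
  then obtain m where m: "m \<in> F" "\<forall>s\<in>F. \<not> R s m" by auto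
  show ?case
  proof (cases "R x m")
    case True
    have "\<not> R s x" if "s \<in> F" for s
      using m(2) that assms(4)[of s x m] True by auto
    then show ?thesis using assms(3)[of x] by auto
  qed (use m in auto)
qed (use assms(3) in auto)

lemma branch_chain: "is_branch T B \<Longrightarrow> u \<in> B \<Longrightarrow> v \<in> B \<Longrightarrow> tle T u v \<or> tle T v u"
  unfolding is_branch_def is_chain_def by blast

lemma branch_subset: "is_branch T B \<Longrightarrow> B \<subseteq> nodes T"
  unfolding is_branch_def is_chain_def by blast

lemma branch_memI:
  assumes B: "is_branch T B" and w: "w \<in> nodes T" and comp: "\<forall>u\<in>B. tle T u w \<or> tle T w u"
  shows "w \<in> B"
proof -
  have "is_chain T (insert w B)"
    unfolding is_chain_def
  proof (intro conjI ballI)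
    show "insert w B \<subseteq> nodes T" using w branch_subset[OF B] by blast
    fix x y assume "x \<in> insert w B" "y \<in> insert w B"
    then show "tle T x y \<or> tle T y x" using comp branch_chain[OF B, of x y] by (auto simp: tle_def)
  qed
  then show ?thesis using B unfolding is_branch_def by blast
qed

lemma branch_downward_closed:
  assumes T: "is_tree T" and B: "is_branch T B" and b: "b \<in> B" and vb: "tlt T v b"
  shows "v \<in> B"
proof (rule branch_memI[OF B])
  show "v \<in> nodes T" using tree_lt_field[OF T vb] by blast
  show "\<forall>u\<in>B. tle T u v \<or> tle T v u"
  proof
    fix u assume "u \<in> B"
    then consider "tle T b u" | "tlt T u b" using branch_chain[OF B b] unfolding tle_def by blast
    then show "tle T u v \<or> tle T v u"
    proof cases
      case 1 then show ?thesis using tree_lt_le_trans[OF T vb] unfolding tle_def by blast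
    next
      case 2 then show ?thesis using tree_lt_linear_below[OF T 2 vb] unfolding tle_def by blast
    qed
  qed
qed

lemma branch_sons_of_greatest:
  assumes T: "is_tree T" and B: "is_branch T B" and top: "\<forall>u\<in>B. tle T u b" and s: "s \<in> sons T b"
  shows "s \<in> B"
proof (rule branch_memI[OF B])
  show "s \<in> nodes T" using sonsD[OF s] by blast
  show "\<forall>u\<in>B. tle T u s \<or> tle T s u"
    using top tree_le_lt_trans[OF T _ conjunct1[OF conjunct2[OF sonsD[OF s]]]]
      unfolding tle_def by blast
qed

lemma chain_down_closure:
  assumes T: "is_tree T" and C: "is_chain T C"
  shows "is_chain T {v \<in> nodes T. \<exists>c\<in>C. tle T v c}"
  unfolding is_chain_def
proof (intro conjI ballI)
  fix v v' assume "v \<in> {v \<in> nodes T. \<exists>c\<in>C. tle T v c}" "v' \<in> {v \<in> nodes T. \<exists>c\<in>C. tle T v c}"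
  then obtain c c' where c: "c \<in> C" "tle T v c" and c': "c' \<in> C" "tle T v' c'" by blast
  consider "tle T c c'" | "tle T c' c" using C c(1) c'(1) unfolding is_chain_def by blast
  then show "tle T v v' \<or> tle T v' v"
  proof cases
    case 1 show ?thesis using tree_le_linear_below[OF T tree_le_trans[OF T c(2) 1] c'(2)] .
  next
    case 2 show ?thesis using tree_le_linear_below[OF T c(2) tree_le_trans[OF T c'(2) 2]] .
  qed
qed blast

lemma branch_tail_infinite:
  assumes T: "is_tree T" and sons: "\<And>x. x \<in> nodes T \<Longrightarrow> sons T x \<noteq> {}"
    and B: "is_branch T B" and b: "b \<in> B"
  shows "infinite {w \<in> B. tle T b w}"
proof
  let ?K = "{w \<in> B. tle T b w}"
  assume fin: "finite ?K"
  have "\<exists>t\<in>?K. \<forall>s\<in>?K. s = t \<or> tlt T s t"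
  proof (rule finite_linear_has_greatest[OF fin])
    show "?K \<noteq> {}" using b by (auto simp: tle_def)
    show "tlt T u v \<Longrightarrow> tlt T v w \<Longrightarrow> tlt T u w" for u v w by (rule tree_lt_trans[OF T])
    show "u \<in> ?K \<Longrightarrow> v \<in> ?K \<Longrightarrow> u = v \<or> tlt T u v \<or> tlt T v u" for u v
      using branch_chain[OF B, of u v] unfolding tle_def by auto
  qed
  then obtain t where t: "t \<in> B" "tle T b t" and greatest: "\<forall>s\<in>?K. s = t \<or> tlt T s t" by blast
  have above_t: "w \<in> ?K" if "w \<in> B" "tlt T t w" for w
    using that tree_le_lt_trans[OF T t(2)] unfolding tle_def by blast
  have not_above_t: "\<not> tlt T t w" if w: "w \<in> B" for w
  proof
    assume tw: "tlt T t w"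
    then have "w = t \<or> tlt T w t" using greatest above_t[OF w tw] by blast
    then show False using tree_lt_asym[OF T tw] tree_lt_irrefl[OF T, of t] tw by auto
  qed
  have top: "\<forall>u\<in>B. tle T u t"
    using branch_chain[OF B _ t(1)] not_above_t unfolding tle_def by blast
  obtain s where s: "s \<in> sons T t" using sons branch_subset[OF B] t(1) by blast
  then show False using branch_sons_of_greatest[OF T B top s] not_above_t sonsD[OF s] by blast
qed

section \<open>Height at most omega\<close>

unbundle cardinal_syntax

lemma Field_pred_order: "Field (pred_order T x) = preds T x"
  unfolding pred_order_def Field_def tle_def by auto

lemma pred_order_Well_order:
  fixes T :: "'a tree"
  assumes T: "is_tree T" and x: "x \<in> nodes T"
  shows "Well_order (pred_order T x)"
  unfolding well_order_on_def linear_order_on_def partial_order_on_def preorder_on_def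
proof (intro conjI)
  let ?R = "pred_order T x"
  show "?R \<subseteq> Field ?R \<times> Field ?R" unfolding Field_def by auto
  show "refl_on (Field ?R) ?R"
    unfolding refl_on_def Field_pred_order by (auto simp: pred_order_def tle_def)
  show "trans ?R"
    unfolding trans_def pred_order_def tle_def using tree_lt_trans[OF T] by blast
  show "antisym ?R"
    unfolding antisym_def pred_order_def tle_def using tree_lt_asym[OF T] by blast
  show "total_on (Field ?R) ?R"
    unfolding total_on_def Field_pred_order unfolding pred_order_def tle_def preds_def
    using tree_lt_linear_below[OF T] by blast
  show "wf (?R - Id)"
  proof (rule wfI_min)
    fix y and Q :: "'a set" assume "y \<in> Q"
    show "\<exists>z\<in>Q. \<forall>w. (w, z) \<in> ?R - Id \<longrightarrow> w \<notin> Q"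
    proof (cases "Q \<inter> preds T x = {}")
      case True
      then show ?thesis using \<open>y \<in> Q\<close> unfolding pred_order_def by blast
    next
      case False
      then obtain m where "m \<in> Q \<inter> preds T x" "\<forall>s\<in>Q \<inter> preds T x. \<not> tlt T s m"
        using tree_preds_wf[OF T x, of "Q \<inter> preds T x"] by blast
      then show ?thesis unfolding pred_order_def tle_def by blast
    qed
  qed
qed

lemma underS_pred_order:
  assumes T: "is_tree T" and a: "a \<in> preds T x"
  shows "underS (pred_order T x) a = preds T a"
  using a tree_preds_mono[OF T, of a x] tree_lt_irrefl[OF T, of a]
    unfolding underS_def pred_order_def tle_def preds_def
  by auto

lemma pred_order_underS:
  assumes T: "is_tree T" and a: "a \<in> preds T x"
  shows "Restr (pred_order T x) (underS (pred_order T x) a) = pred_order T a"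
  using tree_preds_mono[OF T, of a x] a
  unfolding underS_pred_order[OF T a] unfolding pred_order_def preds_def by auto

text \<open>An infinite predecessor set has order type at least \<open>\<omega>\<close>; its proper initial
  segments are again predecessor sets, so every ordinal \<open>\<le> \<omega>\<close> would be realised.\<close>

lemma height_le_omega_finite_preds:
  assumes T: "is_tree T" and h: "height_le_omega T" and x: "x \<in> nodes T"
  shows "finite (preds T x)"
proof (rule ccontr)
  assume inf: "infinite (preds T x)"
  let ?R = "pred_order T x"
  have wo: "Well_order ?R" using pred_order_Well_order[OF T x] .
  obtain \<beta> :: "nat rel" where \<beta>: "Well_order \<beta>" "\<beta> \<le>o natLeq"
    and missing: "\<forall>y\<in>nodes T. \<not> pred_order T y =o \<beta>"
    using h unfolding height_le_omega_def by blast
  have "natLeq \<le>o |preds T x|" using inf infinite_iff_natLeq_ordLeq by blast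
  also have "|preds T x| \<le>o ?R" using card_of_least[OF wo] unfolding Field_pred_order .
  finally have "\<beta> \<le>o ?R" using \<beta>(2) ordLeq_transitive by blast
  then consider "\<beta> =o ?R" | "\<beta> <o ?R" using ordLeq_iff_ordLess_or_ordIso by blast
  then show False
  proof cases
    case 1
    then show False using missing x ordIso_symmetric by blast
  next
    case 2
    then obtain a where a: "a \<in> preds T x" "\<beta> =o Restr ?R (underS ?R a)"
      using ordLess_iff_ordIso_Restr[OF wo \<beta>(1)] unfolding Field_pred_order by blast
    have "a \<in> nodes T" using a(1) tree_lt_field[OF T] unfolding preds_def by blast
    moreover have "\<beta> =o pred_order T a" using a(2) unfolding pred_order_underS[OF T a(1)] .
    ultimately show False using missing ordIso_symmetric by blast
  qed
qed

section \<open>Baire skeletons\<close>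

lemma baire_skeletonI:
  fixes g :: "nat list \<Rightarrow> 'a"
  assumes "inj g" "range g = nodes T" "\<And>a b. tlt T (g a) (g b) \<longleftrightarrow> strict_prefix a b"
  shows "baire_skeleton T"
proof -
  let ?f = "inv_into UNIV g"
  have bij: "bij_betw g UNIV (nodes T)" using assms(1,2) unfolding bij_betw_def by blast
  have "g (?f x) = x" if "x \<in> nodes T" for x
    using that assms(2) f_inv_into_f[of x g UNIV] by simp
  then have "\<forall>x\<in>nodes T. \<forall>y\<in>nodes T. tlt T x y \<longleftrightarrow> strict_prefix (?f x) (?f y)"
    using assms(3) by (metis (no_types))
  then show ?thesis
    unfolding baire_skeleton_def using bij_betw_inv_into[OF bij] by (intro exI[of _ ?f]) simp
qed

lemma son_enumeration_lt_append:
  assumes T: "is_tree T" and son: "\<And>a n. g (a @ [n]) \<in> sons T (g a)"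
  shows "ys \<noteq> [] \<Longrightarrow> tlt T (g xs) (g (xs @ ys))"
proof (induction ys rule: rev_induct)
  case (snoc n ys)
  have step: "tlt T (g (xs @ ys)) (g (xs @ ys @ [n]))" using sonsD[OF son[of "xs @ ys" n]] by simp
  show ?case
  proof (cases "ys = []")
    case False then show ?thesis using tree_lt_trans[OF T snoc.IH[OF False]] step by simp
  qed (use step in simp)
qed simp

lemma son_enumeration_order_embedding:
  fixes g :: "nat list \<Rightarrow> 'a"
  assumes T: "is_tree T"
    and son: "\<And>a n. g (a @ [n]) \<in> sons T (g a)"
    and inj_sons: "\<And>a. inj (\<lambda>n. g (a @ [n]))"
  shows "tlt T (g a) (g b) \<longleftrightarrow> strict_prefix a b" and "inj g"
proof -
  note lt_append = son_enumeration_lt_append[OF T son]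
  have lt: "tlt T (g a) (g b)" if ab: "strict_prefix a b" for a b
  proof -
    obtain z zs where "b = a @ z # zs" using ab by (rule strict_prefixE')
    then show ?thesis using lt_append[of "z # zs" a] by simp
  qed
  have not_le: "\<not> tle T (g a) (g b)" if par: "parallel a b" for a b
  proof
    assume ab: "tle T (g a) (g b)"
    obtain c i as j bs where ij: "i \<noteq> j" "a = c @ i # as" "b = c @ j # bs"
      using parallel_decomp[OF par] by blast
    have ia: "tle T (g (c @ [i])) (g a)" and jb: "tle T (g (c @ [j])) (g b)"
      using lt_append[of as "c @ [i]"] lt_append[of bs "c @ [j]"] ij unfolding tle_def by auto
    have "g (c @ [i]) = g (c @ [j])"
      using sons_eq_if_le_common[OF T son son tree_le_trans[OF T ia ab] jb] .
    then show False using inj_sons[of c] ij(1) unfolding inj_def by blast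
  qed
  have cases: "a = b \<or> strict_prefix a b \<or> strict_prefix b a \<or> parallel a b" for a b :: "nat list"
    by (auto simp: parallel_def strict_prefix_def)
  show "tlt T (g a) (g b) \<longleftrightarrow> strict_prefix a b"
    using cases[of a b] lt[of a b] lt[of b a] not_le[of a b] tree_lt_irrefl[OF T, of "g a"]
      tree_lt_asym[OF T, of "g a" "g b"] unfolding tle_def by auto
  show "inj g"
  proof
    fix a b assume "g a = g b"
    then show "a = b"
      using cases[of a b] lt[of a b] lt[of b a] not_le[of a b] tree_lt_irrefl[OF T, of "g a"]
      unfolding tle_def by auto
  qed
qed

lemma tree_greatest_pred_is_parent:
  assumes T: "is_tree T" and x: "x \<in> nodes T" and fin: "finite (preds T x)" and ne: "preds T x \<noteq> {}"
  shows "\<exists>p\<in>preds T x. x \<in> sons T p"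
proof -
  have "\<exists>p\<in>preds T x. \<forall>s\<in>preds T x. s = p \<or> tlt T s p"
  proof (rule finite_linear_has_greatest[OF fin ne])
    show "tlt T u v \<Longrightarrow> tlt T v w \<Longrightarrow> tlt T u w" for u v w by (rule tree_lt_trans[OF T])
    show "u \<in> preds T x \<Longrightarrow> v \<in> preds T x \<Longrightarrow> u = v \<or> tlt T u v \<or> tlt T v u" for u v
      using tree_lt_linear_below[OF T] unfolding preds_def by blast
  qed
  then obtain p where p: "p \<in> preds T x" "\<forall>s\<in>preds T x. s = p \<or> tlt T s p" by blast
  have "x \<in> sons T p"
  proof (rule sonsI[OF x])
    show "tlt T p x" using p(1) unfolding preds_def by simp
    fix w assume pw: "tlt T p w" and "tlt T w x"
    then have "w = p \<or> tlt T w p" using p(2) unfolding preds_def by simp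
    then show False using tree_lt_asym[OF T pw] tree_lt_irrefl[OF T, of p] pw by auto
  qed
  then show ?thesis using p(1) by blast
qed

lemma son_enumeration_surj:
  fixes g :: "nat list \<Rightarrow> 'a"
  assumes T: "is_tree T" and r: "\<forall>y\<in>nodes T. tle T (g []) y"
    and fin: "\<forall>x\<in>nodes T. finite (preds T x)"
    and sons: "\<And>a. sons T (g a) \<subseteq> range (\<lambda>n. g (a @ [n]))"
  shows "x \<in> nodes T \<Longrightarrow> x \<in> range g"
proof (induction "card (preds T x)" arbitrary: x rule: less_induct)
  case less
  show ?case
  proof (cases "x = g []")
    case False
    then have "g [] \<in> preds T x" using r less.prems unfolding tle_def preds_def by auto
    then have "preds T x \<noteq> {}" by blast
    then obtain p where p: "p \<in> preds T x" "x \<in> sons T p"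
      using tree_greatest_pred_is_parent[OF T less.prems] fin less.prems by blast
    have px: "tlt T p x" using p(1) unfolding preds_def by simp
    have "preds T p \<subseteq> preds T x" using tree_preds_mono[OF T px] .
    moreover have "p \<notin> preds T p" using tree_lt_irrefl[OF T] unfolding preds_def by simp
    ultimately have "preds T p \<subset> preds T x" using p(1) by blast
    then have "card (preds T p) < card (preds T x)"
      using psubset_card_mono fin less.prems by blast
    then have "p \<in> range g" using less.hyps[OF _ tree_lt_field(1)[OF T px]] by simp
    then obtain a where "p = g a" by blast
    then have "x \<in> range (\<lambda>n. g (a @ [n]))" using sons[of a] p(2) by blast
    then show ?thesis by auto
  qed simp
qed

lemma baire_skeleton_if_aleph0_sons:
  assumes T: "is_tree T" and r: "r \<in> nodes T" "\<forall>y\<in>nodes T. tle T r y"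
    and fin: "\<forall>x\<in>nodes T. finite (preds T x)"
    and sns: "\<forall>x\<in>nodes T. sons T x \<approx> (UNIV::nat set)"
  shows "baire_skeleton T"
proof -
  have "\<forall>x\<in>nodes T. \<exists>e. bij_betw e (UNIV::nat set) (sons T x)"
    using sns eqpoll_sym unfolding eqpoll_def by blast
  then obtain en where en: "\<And>x. x \<in> nodes T \<Longrightarrow> bij_betw (en x) (UNIV::nat set) (sons T x)"
    by metis
  \<comment> \<open>\<open>g\<close> walks down from \<open>r\<close>, taking the \<open>n\<close>-th son for each entry \<open>n\<close> of the address\<close>
  define g where "g xs = fold (\<lambda>n v. en v n) xs r" for xs
  have g_snoc: "g (xs @ [n]) = en (g xs) n" for xs n by (simp add: g_def)
  have g_nodes: "g xs \<in> nodes T" for xs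
  proof (induction xs rule: rev_induct)
    case (snoc n xs)
    have s: "en (g xs) n \<in> sons T (g xs)" using bij_betwE[OF en[OF snoc]] by blast
    show ?case unfolding g_snoc using sonsD[OF s] by (rule conjunct1)
  qed (simp add: g_def r)
  have son: "g (a @ [n]) \<in> sons T (g a)" for a n
    using bij_betwE[OF en[OF g_nodes]] unfolding g_snoc by blast
  have inj_sons: "inj (\<lambda>n. g (a @ [n]))" for a
    using en[OF g_nodes[of a]] unfolding g_snoc bij_betw_def by simp
  have lt_iff: "tlt T (g a) (g b) \<longleftrightarrow> strict_prefix a b" for a b
    using son_enumeration_order_embedding(1)[OF T son inj_sons] .
  moreover have "inj g" using son_enumeration_order_embedding(2)[OF T son inj_sons] .
  moreover have "range g = nodes T"
  proof
    show "range g \<subseteq> nodes T" using g_nodes by blast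
    have root: "g [] = r" by (simp add: g_def)
    have "sons T (g a) \<subseteq> range (\<lambda>n. g (a @ [n]))" for a
      using en[OF g_nodes[of a]] unfolding g_snoc bij_betw_def by auto
    moreover have "\<forall>y\<in>nodes T. tle T (g []) y" using r(2) unfolding root .
    ultimately show "nodes T \<subseteq> range g" using son_enumeration_surj[OF T _ fin] by blast
  qed
  ultimately show ?thesis using baire_skeletonI by blast
qed

locale baire_tree =
  fixes T :: "'a tree"
  assumes tree: "is_tree T" and baire: "baire_skeleton T"
begin

definition node :: "nat list \<Rightarrow> 'a" where
  "node = inv_into (nodes T) (SOME f. bij_betw f (nodes T) UNIV \<and>
     (\<forall>x\<in>nodes T. \<forall>y\<in>nodes T. tlt T x y \<longleftrightarrow> strict_prefix (f x) (f y)))"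

lemma node_bij: "bij_betw node UNIV (nodes T)"
  and node_lt_iff: "tlt T (node a) (node b) \<longleftrightarrow> strict_prefix a b"
proof -
  let ?f = "SOME f :: 'a \<Rightarrow> nat list. bij_betw f (nodes T) UNIV \<and>
     (\<forall>x\<in>nodes T. \<forall>y\<in>nodes T. tlt T x y \<longleftrightarrow> strict_prefix (f x) (f y))"
  have "bij_betw ?f (nodes T) UNIV \<and>
    (\<forall>x\<in>nodes T. \<forall>y\<in>nodes T. tlt T x y \<longleftrightarrow> strict_prefix (?f x) (?f y))"
    using someI_ex[OF baire[unfolded baire_skeleton_def]] .
  note f = conjunct1[OF this] conjunct2[OF this]
  show bij: "bij_betw node UNIV (nodes T)" unfolding node_def using bij_betw_inv_into[OF f(1)] .
  have "?f (node a) = a" for a unfolding node_def using f(1) by (simp add: bij_betw_inv_into_right)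
  moreover have "node a \<in> nodes T" "node b \<in> nodes T" using bij_betwE[OF bij] by blast+
  ultimately show "tlt T (node a) (node b) \<longleftrightarrow> strict_prefix a b" using f(2) by simp
qed

lemma node_in_nodes: "node a \<in> nodes T"
  using bij_betwE[OF node_bij] by blast

lemma nodes_eq_range_node: "nodes T = range node"
  using node_bij unfolding bij_betw_def by blast

lemma inj_node: "inj node"
  using node_bij unfolding bij_betw_def by blast

lemma node_le_iff: "tle T (node a) (node b) \<longleftrightarrow> prefix a b"
  unfolding tle_def node_lt_iff using inj_node by (auto simp: inj_eq prefix_order.le_less)

lemma preds_node: "preds T (node a) = node ` {b. strict_prefix b a}"
proof
  show "preds T (node a) \<subseteq> node ` {b. strict_prefix b a}"
  proof
    fix y assume "y \<in> preds T (node a)"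
    then have y: "tlt T y (node a)" unfolding preds_def by simp
    then obtain b where "y = node b" using tree_lt_field(1)[OF tree y] nodes_eq_range_node by blast
    then show "y \<in> node ` {b. strict_prefix b a}" using y node_lt_iff by auto
  qed
qed (auto simp: preds_def node_lt_iff)

lemma finite_preds: "x \<in> nodes T \<Longrightarrow> finite (preds T x)"
proof -
  assume "x \<in> nodes T"
  then obtain a where "x = node a" using nodes_eq_range_node by blast
  moreover have "finite {b. strict_prefix b a}"
    by (rule finite_subset[of _ "set (prefixes a)"]) (auto simp: strict_prefix_def)
  ultimately show ?thesis using preds_node by simp
qed

lemma sons_node: "sons T (node a) = range (\<lambda>n. node (a @ [n]))"
proof
  show "sons T (node a) \<subseteq> range (\<lambda>n. node (a @ [n]))"
  proof
    fix y assume y: "y \<in> sons T (node a)"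
    have "y \<in> nodes T" using sonsD[OF y] by blast
    then obtain b where b: "y = node b" using nodes_eq_range_node by blast
    then have "strict_prefix a b" using sonsD[OF y] node_lt_iff by simp
    then obtain z zs where bz: "b = a @ z # zs" by (rule strict_prefixE')
    have "zs = []"
    proof (rule ccontr)
      assume "zs \<noteq> []"
      then have "tlt T (node a) (node (a @ [z]))" "tlt T (node (a @ [z])) y"
        using b bz node_lt_iff by (auto simp: strict_prefix_def)
      then show False using sonsD[OF y] by blast
    qed
    then show "y \<in> range (\<lambda>n. node (a @ [n]))" using b bz by simp
  qed
  show "range (\<lambda>n. node (a @ [n])) \<subseteq> sons T (node a)"
  proof
    fix y assume "y \<in> range (\<lambda>n. node (a @ [n]))"
    then obtain n where yn: "y = node (a @ [n])" by blast
    show "y \<in> sons T (node a)"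
    proof (rule sonsI)
      show "y \<in> nodes T" "tlt T (node a) y"
        using yn node_in_nodes node_lt_iff by (auto simp: strict_prefix_def)
      fix w assume aw: "tlt T (node a) w" and wy: "tlt T w y"
      obtain c where c: "w = node c" using tree_lt_field(1)[OF tree wy] nodes_eq_range_node by blast
      have "strict_prefix a c" "strict_prefix c (a @ [n])" using aw wy c yn node_lt_iff by auto
      then have "prefix c a" "prefix a c" "a \<noteq> c"
        using prefix_snoc[of c a n] by (auto simp: strict_prefix_def)
      then show False by (simp add: prefix_order.antisym)
    qed
  qed
qed

lemma sons_eqpoll_nat: "x \<in> nodes T \<Longrightarrow> sons T x \<approx> (UNIV :: nat set)"
proof -
  assume "x \<in> nodes T"
  then obtain a where a: "x = node a" using nodes_eq_range_node by blast
  have "inj (\<lambda>n. node (a @ [n]))" by (rule injI) (simp add: inj_node inj_eq)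
  then have "bij_betw (\<lambda>n. node (a @ [n])) UNIV (sons T x)"
    unfolding a sons_node bij_betw_def by simp
  then show ?thesis using eqpoll_sym eqpoll_def by blast
qed

lemma zero_eq_node_Nil: "zero T = node []"
proof (rule zero_eqI[OF tree node_in_nodes])
  show "\<forall>y\<in>nodes T. tle T (node []) y" using nodes_eq_range_node node_le_iff by auto
qed

lemma zero_le: "zero T \<in> nodes T" "y \<in> nodes T \<Longrightarrow> tle T (zero T) y"
  unfolding zero_eq_node_Nil using node_in_nodes nodes_eq_range_node node_le_iff by auto

lemma maxs_empty: "maxs T = {}"
proof -
  have "tlt T (node a) (node (a @ [0]))" for a using node_lt_iff by (simp add: strict_prefix_def)
  then show ?thesis using nodes_eq_range_node unfolding maxs_def by auto
qed

lemma locally_strict_leaf_node_mono: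
  assumes ls: "locally_strict F" and sk: "skel F = T"
  shows "leaf F (node (a @ d)) \<subseteq> leaf F (node a)"
proof (induction d rule: rev_induct)
  case (snoc n d)
  have "node (a @ d) \<in> nodes T - maxs T" using node_in_nodes maxs_empty by simp
  then have "leaf F (node (a @ d)) = (\<Union>s\<in>sons T (node (a @ d)). leaf F s)"
    using ls sk unfolding locally_strict_def by blast
  then have "leaf F (node (a @ d @ [n])) \<subseteq> leaf F (node (a @ d))" using sons_node by auto
  then show ?case using snoc.IH by simp
qed simp

lemma nonincreasing_if_locally_strict:
  assumes ls: "locally_strict F" and sk: "skel F = T"
  shows "nonincreasing F"
  unfolding nonincreasing_def
proof (intro ballI impI)
  fix x y assume "x \<in> nodes (skel F)" "y \<in> nodes (skel F)" "tle (skel F) x y"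
  then obtain a d where "x = node a" "y = node (a @ d)"
    using nodes_eq_range_node node_le_iff sk unfolding prefix_def by (metis imageE)
  then show "leaf F y \<subseteq> leaf F x" using locally_strict_leaf_node_mono[OF ls sk] by simp
qed

lemma incomparable_leaves_disjoint:
  assumes ls: "locally_strict F" and sk: "skel F = T"
    and x: "x \<in> nodes T" and y: "y \<in> nodes T" and inc: "\<not> tle T x y" "\<not> tle T y x"
  shows "leaf F x \<inter> leaf F y = {}"
proof -
  obtain a b where ab: "x = node a" "y = node b" using x y nodes_eq_range_node by blast
  then have "parallel a b" using inc node_le_iff by (auto simp: parallel_def)
  then obtain c i as j bs where ij: "i \<noteq> j" "a = c @ i # as" "b = c @ j # bs"
    using parallel_decomp by blast
  have sub: "leaf F x \<subseteq> leaf F (node (c @ [i]))" "leaf F y \<subseteq> leaf F (node (c @ [j]))"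
    using locally_strict_leaf_node_mono[OF ls sk] ab ij
      by (metis append_Cons append_assoc append_Nil)+
  have "node c \<in> nodes T - maxs T" using node_in_nodes maxs_empty by simp
  then have "disjoint_family_on (leaf F) (sons T (node c))"
    using ls sk unfolding locally_strict_def by blast
  moreover have "node (c @ [i]) \<noteq> node (c @ [j])" using ij(1) by (simp add: inj_node inj_eq)
  ultimately have "leaf F (node (c @ [i])) \<inter> leaf F (node (c @ [j])) = {}"
    using sons_node unfolding disjoint_family_on_def by auto
  then show ?thesis using sub by blast
qed

end

section \<open>Grafts\<close>

locale hybrid = baire_tree T for T :: "'a tree" +
  fixes \<Gamma> :: "'a tree set"
  assumes consistent: "consistent_grafts T \<Gamma>"
    and grafts_aleph0: "\<And>G. G \<in> \<Gamma> \<Longrightarrow> aleph0_branching G"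
    and grafts_height: "\<And>G. G \<in> \<Gamma> \<Longrightarrow> height_le_omega G"
begin

abbreviation "S \<equiv> supp T \<Gamma>"
abbreviation "H \<equiv> hybr T \<Gamma>"

lemma graft_of: "G \<in> \<Gamma> \<Longrightarrow> is_graft T G"
  using consistent unfolding consistent_grafts_def by blast

lemma graft_tree: "G \<in> \<Gamma> \<Longrightarrow> is_tree G"
  using graft_of unfolding is_graft_def by blast

lemma graft_finite_preds: "G \<in> \<Gamma> \<Longrightarrow> x \<in> nodes G \<Longrightarrow> finite (preds G x)"
  using height_le_omega_finite_preds[OF graft_tree grafts_height] .

lemma graft_zero:
  assumes "G \<in> \<Gamma>"
  shows "zero G \<in> nodes G" "\<And>y. y \<in> nodes G \<Longrightarrow> tle G (zero G) y"
  using zero_least[OF graft_tree[OF assms]] graft_of[OF assms] unfolding is_graft_def by auto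

lemma graft_zero_in_T: "G \<in> \<Gamma> \<Longrightarrow> zero G \<in> nodes T"
  using graft_of unfolding is_graft_def by blast

lemma graft_max_in_T: "G \<in> \<Gamma> \<Longrightarrow> m \<in> maxs G \<Longrightarrow> m \<in> nodes T \<and> tlt T (zero G) m"
  using graft_of unfolding is_graft_def by blast

lemma impl_notin_T: "G \<in> \<Gamma> \<Longrightarrow> x \<in> impl G \<Longrightarrow> x \<notin> nodes T"
  using graft_of unfolding is_graft_def by blast

lemma implD: "x \<in> impl G \<Longrightarrow> x \<in> nodes G \<and> x \<noteq> zero G \<and> x \<notin> maxs G"
  unfolding impl_def by blast

lemma graft_node_cases: "G \<in> \<Gamma> \<Longrightarrow> x \<in> nodes G \<Longrightarrow> x = zero G \<or> x \<in> maxs G \<or> x \<in> impl G"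
  unfolding impl_def by blast

lemma graft_zero_lt:
  assumes "G \<in> \<Gamma>" "x \<in> nodes G" "x \<noteq> zero G"
  shows "tlt G (zero G) x"
  using graft_zero(2)[OF assms(1,2)] assms(3) unfolding tle_def by auto

lemma graft_zero_not_max:
  assumes "G \<in> \<Gamma>"
  shows "zero G \<notin> maxs G"
proof
  assume zm: "zero G \<in> maxs G"
  obtain a b where ab: "a \<in> nodes G" "b \<in> nodes G" "a \<noteq> b"
    using graft_of[OF assms] unfolding is_graft_def by blast
  then have "a \<noteq> zero G \<or> b \<noteq> zero G" by blast
  then obtain c where "c \<in> nodes G" "c \<noteq> zero G" using ab by blast
  then have "tlt G (zero G) c" using graft_zero_lt[OF assms] by blast
  then show False using maxsD[OF zm] by blast
qed

lemma impl_gt_zero: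
  assumes "G \<in> \<Gamma>" "x \<in> impl G"
  shows "tlt G (zero G) x"
  using graft_zero_lt[OF assms(1)] implD[OF assms(2)] by blast

lemma max_gt_zero:
  assumes "G \<in> \<Gamma>" "m \<in> maxs G"
  shows "tlt G (zero G) m"
proof -
  have "m \<noteq> zero G" using graft_zero_not_max[OF assms(1)] assms(2) by blast
  then show ?thesis using graft_zero_lt[OF assms(1)] maxsD[OF assms(2)] by blast
qed

lemma graft_maxs_eq:
  assumes "G \<in> \<Gamma>" "m1 \<in> maxs G" "m2 \<in> maxs G" "tle T m1 v" "tle T m2 v"
  shows "m1 = m2"
proof (rule ccontr)
  assume ne: "m1 \<noteq> m2"
  have "is_antichain T (maxs G)" using graft_of[OF assms(1)] unfolding is_graft_def by blast
  then have "incomp T m1 m2" using assms(2,3) ne unfolding is_antichain_def by blast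
  then show False using tree_le_linear_below[OF tree assms(4,5)] unfolding incomp_def by blast
qed

lemma troot_eq:
  assumes "G \<in> \<Gamma>" "m \<in> maxs G" "tle T m v"
  shows "troot T v (maxs G) = m"
  unfolding troot_def
proof (rule the_equality)
  show "m \<in> maxs G \<and> tle T m v" using assms by blast
  fix r assume "r \<in> maxs G \<and> tle T r v"
  then show "r = m" using graft_maxs_eq[OF assms(1)] assms by blast
qed

lemma down_iff: "v \<in> down T A \<longleftrightarrow> (\<exists>m\<in>A. tle T m v)"
  unfolding down_def by blast

lemma expl_iff: "v \<in> expl T G \<longleftrightarrow> tlt T (zero G) v \<and> \<not> (\<exists>m\<in>maxs G. tle T m v)"
  unfolding expl_def down_def by blast

lemma supp_iff: "v \<in> S \<longleftrightarrow> v \<in> nodes T \<and> (\<forall>G\<in>\<Gamma>. tlt T (zero G) v \<longrightarrow> (\<exists>m\<in>maxs G. tle T m v))"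
  by (auto simp: supp_def expl_iff)

lemma supp_in_T: "v \<in> S \<Longrightarrow> v \<in> nodes T"
  using supp_iff by blast

lemma supp_above_zero: "v \<in> S \<Longrightarrow> G \<in> \<Gamma> \<Longrightarrow> tlt T (zero G) v \<Longrightarrow> \<exists>m\<in>maxs G. tle T m v"
  using supp_iff by blast

lemma consistent_pair:
  assumes "D \<in> \<Gamma>" "E \<in> \<Gamma>" "D \<noteq> E"
  shows "impl D \<inter> impl E = {}"
    and "incomp T (zero D) (zero E) \<or> (\<exists>m\<in>maxs E. tle T m (zero D)) \<or> (\<exists>m\<in>maxs D. tle T m (zero E))"
proof -
  have "\<forall>D\<in>\<Gamma>. \<forall>E\<in>\<Gamma>. D \<noteq> E \<longrightarrow>
        impl D \<inter> impl E = {} \<and>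
        (incomp T (zero D) (zero E) \<or> zero D \<in> down T (maxs E) \<or> zero E \<in> down T (maxs D))"
    using consistent unfolding consistent_grafts_def by simp
  then have "impl D \<inter> impl E = {} \<and>
        (incomp T (zero D) (zero E) \<or> zero D \<in> down T (maxs E) \<or> zero E \<in> down T (maxs D))"
    using assms by simp
  then show "impl D \<inter> impl E = {}"
    and "incomp T (zero D) (zero E) \<or> (\<exists>m\<in>maxs E. tle T m (zero D)) \<or> (\<exists>m\<in>maxs D. tle T m (zero E))"
    unfolding down_iff by simp_all
qed

lemma impl_unique: "D \<in> \<Gamma> \<Longrightarrow> E \<in> \<Gamma> \<Longrightarrow> x \<in> impl D \<Longrightarrow> x \<in> impl E \<Longrightarrow> D = E"
  using consistent_pair(1) by blast

lemma impl_notin_supp: "G \<in> \<Gamma> \<Longrightarrow> x \<in> impl G \<Longrightarrow> x \<notin> S"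
  using impl_notin_T supp_in_T by blast

lemma graft_zero_inj:
  assumes "D \<in> \<Gamma>" "E \<in> \<Gamma>" "zero D = zero E"
  shows "D = E"
proof (rule ccontr)
  assume ne: "D \<noteq> E"
  have "tle T (zero D) (zero E)" using assms(3) unfolding tle_def by simp
  then have ni: "\<not> incomp T (zero D) (zero E)" unfolding incomp_def by blast
  show False
  proof (cases "\<exists>m\<in>maxs E. tle T m (zero D)")
    case True
    then obtain m where m: "m \<in> maxs E" "tle T m (zero D)" by blast
    have "tlt T (zero E) m" using graft_max_in_T[OF assms(2) m(1)] by blast
    then show False
      using m(2) assms(3) tree_lt_asym[OF tree] tree_lt_irrefl[OF tree] unfolding tle_def by metis
  next
    case False
    then obtain m where m: "m \<in> maxs D" "tle T m (zero E)"
      using consistent_pair(2)[OF assms(1,2) ne] ni by blast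
    have "tlt T (zero D) m" using graft_max_in_T[OF assms(1) m(1)] by blast
    then show False
      using m(2) assms(3) tree_lt_asym[OF tree] tree_lt_irrefl[OF tree] unfolding tle_def by metis
  qed
qed

lemma zero_in_supp:
  assumes "E \<in> \<Gamma>"
  shows "zero E \<in> S"
  unfolding supp_iff
proof (intro conjI ballI impI)
  show "zero E \<in> nodes T" using graft_zero_in_T[OF assms] .
  fix D assume D: "D \<in> \<Gamma>" and lt: "tlt T (zero D) (zero E)"
  have ne: "D \<noteq> E" using lt tree_lt_irrefl[OF tree] by blast
  have ni: "\<not> incomp T (zero D) (zero E)" using lt unfolding incomp_def tle_def by blast
  show "\<exists>m\<in>maxs D. tle T m (zero E)"
  proof (rule ccontr)
    assume nm: "\<not> (\<exists>m\<in>maxs D. tle T m (zero E))"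
    then obtain m where m: "m \<in> maxs E" "tle T m (zero D)"
      using consistent_pair(2)[OF D assms ne] ni by blast
    have "tlt T (zero E) m" using graft_max_in_T[OF assms m(1)] by blast
    then have "tlt T (zero E) (zero D)" using m(2) tree_lt_trans[OF tree] unfolding tle_def by blast
    then show False using lt tree_lt_asym[OF tree] by blast
  qed
qed

lemma max_in_supp:
  assumes "G \<in> \<Gamma>" "m \<in> maxs G"
  shows "m \<in> S"
  unfolding supp_iff
proof (intro conjI ballI impI)
  show "m \<in> nodes T" using graft_max_in_T[OF assms] by blast
  fix E assume E: "E \<in> \<Gamma>" and lt: "tlt T (zero E) m"
  have zm: "tlt T (zero G) m" using graft_max_in_T[OF assms] by blast
  show "\<exists>m'\<in>maxs E. tle T m' m"
  proof (cases "E = G")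
    case True then show ?thesis using assms(2) unfolding tle_def by blast
  next
    case ne: False
    have ni: "\<not> incomp T (zero E) (zero G)"
      using tree_lt_linear_below[OF tree lt zm] unfolding incomp_def tle_def by blast
    consider "\<exists>m'\<in>maxs G. tle T m' (zero E)" | "\<exists>m'\<in>maxs E. tle T m' (zero G)"
      using consistent_pair(2)[OF E assms(1) ne] ni by blast
    then show ?thesis
    proof cases
      case 1
      then obtain m' where m': "m' \<in> maxs G" "tle T m' (zero E)" by blast
      then have "tle T m' m" using lt tree_lt_trans[OF tree] unfolding tle_def by blast
      then have "m' = m" using graft_maxs_eq[OF assms(1) m'(1) assms(2)] unfolding tle_def by blast
      then have "tlt T m m" using m'(2) lt tree_lt_trans[OF tree] unfolding tle_def by blast
      then show ?thesis using tree_lt_irrefl[OF tree] by blast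
    next
      case 2
      then obtain m' where m': "m' \<in> maxs E" "tle T m' (zero G)" by blast
      then have "tle T m' m" using zm tree_lt_trans[OF tree] unfolding tle_def by blast
      then show ?thesis using m' by blast
    qed
  qed
qed

section \<open>The hybrid order\<close>

lemma hybr_nodes: "nodes H = S \<union> (\<Union>G\<in>\<Gamma>. impl G)"
  unfolding hybr_def nodes_def by simp

lemma hybr_lt_iff: "tlt H x y \<longleftrightarrow>
       (x \<in> S \<and> y \<in> S \<and> tlt T x y) \<or>
       (\<exists>G\<in>\<Gamma>. x \<in> impl G \<and> y \<in> impl G \<and> tlt G x y) \<or>
       (\<exists>G\<in>\<Gamma>. x \<in> S \<and> y \<in> impl G \<and> tle T x (zero G)) \<or>
       (\<exists>G\<in>\<Gamma>. x \<in> impl G \<and> y \<in> S \<and> y \<in> down T (maxs G) \<and>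
                tlt G x (troot T y (maxs G))) \<or>
       (\<exists>D\<in>\<Gamma>. \<exists>E\<in>\<Gamma>. D \<noteq> E \<and> x \<in> impl D \<and> y \<in> impl E \<and>
                zero E \<in> down T (maxs D) \<and> tlt D x (troot T (zero E) (maxs D)))"
  unfolding hybr_def tlt_def by simp

lemma down_troot_lt_iff:
  assumes G: "G \<in> \<Gamma>"
  shows "y \<in> down T (maxs G) \<and> tlt G x (troot T y (maxs G)) \<longleftrightarrow> (\<exists>m\<in>maxs G. tle T m y \<and> tlt G x m)"
  using troot_eq[OF G] unfolding down_iff by auto

lemma hybr_lt_supp_iff:
  assumes y: "y \<in> S"
  shows "tlt H x y \<longleftrightarrow> (x \<in> S \<and> tlt T x y) \<or>
    (\<exists>G\<in>\<Gamma>. x \<in> impl G \<and> (\<exists>m\<in>maxs G. tle T m y \<and> tlt G x m))"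
proof -
  have "y \<notin> impl G" if "G \<in> \<Gamma>" for G using impl_notin_supp[OF that] y by blast
  then have "tlt H x y \<longleftrightarrow> (x \<in> S \<and> tlt T x y) \<or>
      (\<exists>G\<in>\<Gamma>. x \<in> impl G \<and> y \<in> down T (maxs G) \<and> tlt G x (troot T y (maxs G)))"
    unfolding hybr_lt_iff using y by blast
  then show ?thesis using down_troot_lt_iff by simp
qed

lemma hybr_lt_supp_supp_iff: "y \<in> S \<Longrightarrow> x \<in> S \<Longrightarrow> tlt H x y \<longleftrightarrow> tlt T x y"
  using hybr_lt_supp_iff impl_notin_supp by blast

lemma hybr_lt_impl_supp_iff:
  "y \<in> S \<Longrightarrow> G \<in> \<Gamma> \<Longrightarrow> x \<in> impl G \<Longrightarrow>
    tlt H x y \<longleftrightarrow> (\<exists>m\<in>maxs G. tle T m y \<and> tlt G x m)"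
  using hybr_lt_supp_iff impl_notin_supp impl_unique by blast

lemma hybr_lt_impl_iff:
  assumes E: "E \<in> \<Gamma>" and y: "y \<in> impl E"
  shows "tlt H x y \<longleftrightarrow> tle H x (zero E) \<or> (x \<in> impl E \<and> tlt E x y)"
proof -
  have zE: "zero E \<in> S" using zero_in_supp[OF E] .
  have yS: "y \<notin> S" using impl_notin_supp[OF E y] .
  have no_max_below_zero: "\<not> (tle T m (zero E))" if m: "m \<in> maxs E" for m
    using tree_lt_le_trans[OF tree conjunct2[OF graft_max_in_T[OF E m]]] tree_lt_irrefl[OF tree]
      by blast
  have b2: "(\<exists>G\<in>\<Gamma>. x \<in> impl G \<and> y \<in> impl G \<and> tlt G x y) \<longleftrightarrow> x \<in> impl E \<and> tlt E x y"
    using impl_unique[OF _ E _ y] E y by blast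
  have b3: "(\<exists>G\<in>\<Gamma>. x \<in> S \<and> y \<in> impl G \<and> tle T x (zero G)) \<longleftrightarrow> x \<in> S \<and> tle T x (zero E)"
    using impl_unique[OF _ E _ y] E y by blast
  have b5: "(\<exists>D\<in>\<Gamma>. \<exists>E'\<in>\<Gamma>. D \<noteq> E' \<and> x \<in> impl D \<and> y \<in> impl E' \<and>
                zero E' \<in> down T (maxs D) \<and> tlt D x (troot T (zero E') (maxs D))) \<longleftrightarrow>
      (\<exists>D\<in>\<Gamma>. x \<in> impl D \<and> (\<exists>m\<in>maxs D. tle T m (zero E) \<and> tlt D x m))"
  proof
    assume "\<exists>D\<in>\<Gamma>. \<exists>E'\<in>\<Gamma>. D \<noteq> E' \<and> x \<in> impl D \<and> y \<in> impl E' \<and>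
                zero E' \<in> down T (maxs D) \<and> tlt D x (troot T (zero E') (maxs D))"
    then obtain D E' where "D \<in> \<Gamma>" "E' \<in> \<Gamma>" "x \<in> impl D" "y \<in> impl E'"
      "zero E' \<in> down T (maxs D) \<and> tlt D x (troot T (zero E') (maxs D))" by blast
    moreover from this have "E' = E" using impl_unique[OF _ E _ y] by blast
    ultimately show "\<exists>D\<in>\<Gamma>. x \<in> impl D \<and> (\<exists>m\<in>maxs D. tle T m (zero E) \<and> tlt D x m)"
      using down_troot_lt_iff by blast
  next
    assume "\<exists>D\<in>\<Gamma>. x \<in> impl D \<and> (\<exists>m\<in>maxs D. tle T m (zero E) \<and> tlt D x m)"
    then obtain D m where D: "D \<in> \<Gamma>" "x \<in> impl D" "m \<in> maxs D" "tle T m (zero E)" "tlt D x m"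
      by blast
    then have "D \<noteq> E" using no_max_below_zero by blast
    moreover have "zero E \<in> down T (maxs D) \<and> tlt D x (troot T (zero E) (maxs D))"
      using down_troot_lt_iff[OF D(1)] D(3-5) by blast
    ultimately show "\<exists>D\<in>\<Gamma>. \<exists>E'\<in>\<Gamma>. D \<noteq> E' \<and> x \<in> impl D \<and> y \<in> impl E' \<and>
                zero E' \<in> down T (maxs D) \<and> tlt D x (troot T (zero E') (maxs D))"
      using D(1,2) E y by blast
  qed
  have "tle H x (zero E) \<longleftrightarrow> (x \<in> S \<and> tle T x (zero E)) \<or>
      (\<exists>D\<in>\<Gamma>. x \<in> impl D \<and> (\<exists>m\<in>maxs D. tle T m (zero E) \<and> tlt D x m))"
    using hybr_lt_supp_iff[OF zE, of x] zE unfolding tle_def by auto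
  then show ?thesis unfolding hybr_lt_iff b2 b3 b5 using yS by blast
qed

lemma hybr_lt_field:
  assumes "tlt H x y"
  shows "x \<in> nodes H" "y \<in> nodes H"
  using assms unfolding hybr_lt_iff hybr_nodes
  by (elim disjE bexE conjE; force simp: down_iff)+

lemma not_hybr_lt_impl_zero:
  assumes E: "E \<in> \<Gamma>" and x: "x \<in> impl E"
  shows "\<not> tlt H x (zero E)"
proof
  assume "tlt H x (zero E)"
  then obtain m where m: "m \<in> maxs E" "tle T m (zero E)" "tlt E x m"
    using hybr_lt_impl_supp_iff[OF zero_in_supp[OF E] E x] by blast
  have "tlt T (zero E) m" using graft_max_in_T[OF E m(1)] by blast
  then show False
    using m(2) tree_lt_asym[OF tree] tree_lt_irrefl[OF tree] unfolding tle_def by blast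
qed

lemma hybr_node_cases: "x \<in> nodes H \<Longrightarrow> (x \<in> S \<Longrightarrow> P) \<Longrightarrow> (\<And>E. E \<in> \<Gamma> \<Longrightarrow> x \<in> impl E \<Longrightarrow> P) \<Longrightarrow> P"
  unfolding hybr_nodes by blast

lemma hybr_lt_irrefl: "\<not> tlt H x x"
proof
  assume h: "tlt H x x"
  then have "x \<in> nodes H" using hybr_lt_field by blast
  then show False
  proof (rule hybr_node_cases)
    assume "x \<in> S" then show False using h hybr_lt_supp_supp_iff tree_lt_irrefl[OF tree] by blast
  next
    fix E assume E: "E \<in> \<Gamma>" "x \<in> impl E"
    have "tle H x (zero E) \<or> (x \<in> impl E \<and> tlt E x x)" using h hybr_lt_impl_iff[OF E] by blast
    moreover have "x \<noteq> zero E" using impl_notin_supp[OF E] zero_in_supp[OF E(1)] by blast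
    ultimately show False
      using not_hybr_lt_impl_zero[OF E] tree_lt_irrefl[OF graft_tree[OF E(1)]]
      unfolding tle_def by blast
  qed
qed

lemma hybr_lt_supp_mono:
  assumes z: "z \<in> S" and z': "z' \<in> S" and zz': "tlt T z z'" and xz: "tlt H x z"
  shows "tlt H x z'"
proof -
  consider "x \<in> S" "tlt T x z" | G m where "G \<in> \<Gamma>" "x \<in> impl G" "m \<in> maxs G" "tle T m z" "tlt G x m"
    using hybr_lt_supp_iff[OF z] xz by blast
  then show ?thesis
  proof cases
    case 1 then show ?thesis
      using hybr_lt_supp_supp_iff[OF z' 1(1)] tree_lt_trans[OF tree 1(2) zz'] by blast
  next
    case 2
    have "tle T m z'" using tree_le_lt_trans[OF tree 2(4) zz'] unfolding tle_def by blast
    then show ?thesis using hybr_lt_impl_supp_iff[OF z' 2(1,2)] 2(3,5) by blast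
  qed
qed

lemma hybr_lt_trans_supp:
  assumes z: "z \<in> S" and xy: "tlt H x y" and yz: "tlt H y z"
  shows "tlt H x z"
proof -
  consider "y \<in> S" "tlt T y z" | G m where "G \<in> \<Gamma>" "y \<in> impl G" "m \<in> maxs G" "tle T m z" "tlt G y m"
    using hybr_lt_supp_iff[OF z] yz by blast
  then show ?thesis
  proof cases
    case 1 show ?thesis using hybr_lt_supp_mono[OF 1(1) z 1(2) xy] .
  next
    case 2
    have zS: "zero G \<in> S" using zero_in_supp[OF 2(1)] .
    have zz: "tlt T (zero G) z"
      using tree_lt_le_trans[OF tree conjunct2[OF graft_max_in_T[OF 2(1,3)]] 2(4)] .
    consider "x = zero G" | "tlt H x (zero G)" | "x \<in> impl G" "tlt G x y"
      using hybr_lt_impl_iff[OF 2(1,2)] xy unfolding tle_def by blast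
    then show ?thesis
    proof cases
      case 1 then show ?thesis using hybr_lt_supp_supp_iff[OF z zS] zz by blast
    next
      case 2 then show ?thesis using hybr_lt_supp_mono[OF zS z zz] by blast
    next
      case 3
      have "tlt G x m" using tree_lt_trans[OF graft_tree[OF 2(1)] 3(2) 2(5)] .
      then show ?thesis using hybr_lt_impl_supp_iff[OF z 2(1) 3(1)] 2(3,4) by blast
    qed
  qed
qed

lemma hybr_lt_trans:
  assumes xy: "tlt H x y" and yz: "tlt H y z"
  shows "tlt H x z"
proof -
  have "z \<in> nodes H" using hybr_lt_field yz by blast
  then show ?thesis
  proof (rule hybr_node_cases)
    assume "z \<in> S" then show ?thesis using hybr_lt_trans_supp xy yz by blast
  next
    fix E assume E: "E \<in> \<Gamma>" "z \<in> impl E"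
    have zS: "zero E \<in> S" using zero_in_supp[OF E(1)] .
    consider "y = zero E" | "tlt H y (zero E)" | "y \<in> impl E" "tlt E y z"
      using hybr_lt_impl_iff[OF E] yz unfolding tle_def by blast
    then show ?thesis
    proof cases
      case 1 then show ?thesis using hybr_lt_impl_iff[OF E] xy unfolding tle_def by blast
    next
      case 2 then have "tlt H x (zero E)" using hybr_lt_trans_supp[OF zS xy] by blast
      then show ?thesis using hybr_lt_impl_iff[OF E] unfolding tle_def by blast
    next
      case 3
      consider "tle H x (zero E)" | "x \<in> impl E" "tlt E x y"
        using hybr_lt_impl_iff[OF E(1) 3(1)] xy by blast
      then show ?thesis
      proof cases
        case 1 then show ?thesis using hybr_lt_impl_iff[OF E] by blast
      next
        case 2 then show ?thesis
          using hybr_lt_impl_iff[OF E] 3 tree_lt_trans[OF graft_tree[OF E(1)]] by blast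
      qed
    qed
  qed
qed

lemma hybr_lt_asym: "tlt H x y \<Longrightarrow> \<not> tlt H y x"
  using hybr_lt_trans hybr_lt_irrefl by blast

lemma hybr_comparable_supp_impl:
  assumes a: "a \<in> S" "tlt T a y"
    and b: "G \<in> \<Gamma>" "b \<in> impl G" "m \<in> maxs G" "tle T m y" "tlt G b m"
  shows "tlt H a b \<or> tlt H b a"
proof -
  have zy: "tlt T (zero G) y"
    using tree_lt_le_trans[OF tree conjunct2[OF graft_max_in_T[OF b(1,3)]] b(4)] .
  have zS: "zero G \<in> S" using zero_in_supp[OF b(1)] .
  consider "a = zero G" | "tlt T a (zero G)" | "tlt T (zero G) a"
    using tree_lt_linear_below[OF tree a(2) zy] by blast
  then show ?thesis
  proof cases
    case 1 then show ?thesis using hybr_lt_impl_iff[OF b(1,2)] unfolding tle_def by blast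
  next
    case 2 then have "tlt H a (zero G)" using hybr_lt_supp_supp_iff[OF zS a(1)] by blast
    then show ?thesis using hybr_lt_impl_iff[OF b(1,2)] unfolding tle_def by blast
  next
    case 3
    then obtain m' where m': "m' \<in> maxs G" "tle T m' a" using supp_above_zero[OF a(1) b(1)] by blast
    have "tle T m' y" using tree_le_lt_trans[OF tree m'(2) a(2)] unfolding tle_def by blast
    then have "m' = m" using graft_maxs_eq[OF b(1) m'(1) b(3) _ b(4)] by blast
    then show ?thesis using hybr_lt_impl_supp_iff[OF a(1) b(1,2)] m' b(5) by blast
  qed
qed

lemma hybr_comparable_impl_impl:
  assumes a: "G \<in> \<Gamma>" "a \<in> impl G" "m \<in> maxs G" "tle T m y" "tlt G a m"
    and b: "G' \<in> \<Gamma>" "b \<in> impl G'" "m' \<in> maxs G'" "tle T m' y" "tlt G' b m'"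
  shows "a = b \<or> tlt H a b \<or> tlt H b a"
proof (cases "G' = G")
  case True
  then have "m' = m" using graft_maxs_eq[OF a(1) _ a(3) _ a(4)] b by blast
  then have "a = b \<or> tlt G a b \<or> tlt G b a"
    using tree_lt_linear_below[OF graft_tree[OF a(1)] a(5)] b True by blast
  then show ?thesis
    using hybr_lt_impl_iff[OF a(1,2), of b] hybr_lt_impl_iff[OF a(1), of b a] b(2) a(2) True
    by blast
next
  case ne: False
  have za: "tlt T (zero G) y"
    using tree_lt_le_trans[OF tree conjunct2[OF graft_max_in_T[OF a(1,3)]] a(4)] .
  have zb: "tlt T (zero G') y"
    using tree_lt_le_trans[OF tree conjunct2[OF graft_max_in_T[OF b(1,3)]] b(4)] .
  have "\<not> incomp T (zero G) (zero G')"
    using tree_lt_linear_below[OF tree za zb] unfolding incomp_def tle_def by blast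
  then consider "\<exists>k\<in>maxs G'. tle T k (zero G)" | "\<exists>k\<in>maxs G. tle T k (zero G')"
    using consistent_pair(2)[OF a(1) b(1) ne[symmetric]] by blast
  then show ?thesis
  proof cases
    case 1
    then obtain k where k: "k \<in> maxs G'" "tle T k (zero G)" by blast
    have "tle T k y" using tree_le_lt_trans[OF tree k(2) za] unfolding tle_def by blast
    then have "k = m'" using graft_maxs_eq[OF b(1) k(1) b(3) _ b(4)] by blast
    then have "tlt H b (zero G)"
      using hybr_lt_impl_supp_iff[OF zero_in_supp[OF a(1)] b(1,2)] k b(5) by blast
    then show ?thesis using hybr_lt_impl_iff[OF a(1,2)] unfolding tle_def by blast
  next
    case 2
    then obtain k where k: "k \<in> maxs G" "tle T k (zero G')" by blast
    have "tle T k y" using tree_le_lt_trans[OF tree k(2) zb] unfolding tle_def by blast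
    then have "k = m" using graft_maxs_eq[OF a(1) k(1) a(3) _ a(4)] by blast
    then have "tlt H a (zero G')"
      using hybr_lt_impl_supp_iff[OF zero_in_supp[OF b(1)] a(1,2)] k a(5) by blast
    then show ?thesis using hybr_lt_impl_iff[OF b(1,2)] unfolding tle_def by blast
  qed
qed

lemma hybr_lt_linear_below_supp:
  assumes y: "y \<in> S" and a: "tlt H a y" and b: "tlt H b y"
  shows "a = b \<or> tlt H a b \<or> tlt H b a"
proof -
  consider (SS) "a \<in> S" "tlt T a y" "b \<in> S" "tlt T b y"
    | (SI) G m where "a \<in> S" "tlt T a y" "G \<in> \<Gamma>" "b \<in> impl G" "m \<in> maxs G" "tle T m y" "tlt G b m"
    | (IS) G m where "b \<in> S" "tlt T b y" "G \<in> \<Gamma>" "a \<in> impl G" "m \<in> maxs G" "tle T m y" "tlt G a m"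
    | (II) G m G' m' where "G \<in> \<Gamma>" "a \<in> impl G" "m \<in> maxs G" "tle T m y" "tlt G a m"
        "G' \<in> \<Gamma>" "b \<in> impl G'" "m' \<in> maxs G'" "tle T m' y" "tlt G' b m'"
    using hybr_lt_supp_iff[OF y, of a] hybr_lt_supp_iff[OF y, of b] a b by blast
  then show ?thesis
  proof cases
    case SS
    then show ?thesis using tree_lt_linear_below[OF tree SS(2,4)]
      hybr_lt_supp_supp_iff[OF SS(3,1)] hybr_lt_supp_supp_iff[OF SS(1,3)] by blast
  next
    case SI then show ?thesis using hybr_comparable_supp_impl[OF SI(1,2) SI(3-7)] by blast
  next
    case IS then show ?thesis using hybr_comparable_supp_impl[OF IS(1,2) IS(3-7)] by blast
  next
    case II show ?thesis using hybr_comparable_impl_impl[OF II] .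
  qed
qed

lemma hybr_lt_linear_below:
  assumes a: "tlt H a y" and b: "tlt H b y"
  shows "a = b \<or> tlt H a b \<or> tlt H b a"
proof -
  have "y \<in> nodes H" using hybr_lt_field a by blast
  then show ?thesis
  proof (rule hybr_node_cases)
    assume "y \<in> S" then show ?thesis using hybr_lt_linear_below_supp a b by blast
  next
    fix E assume E: "E \<in> \<Gamma>" "y \<in> impl E"
    have zS: "zero E \<in> S" using zero_in_supp[OF E(1)] .
    have below_impl: "tlt H u v" if "tle H u (zero E)" "v \<in> impl E" for u v
      using hybr_lt_impl_iff[OF E(1) that(2)] that(1) by blast
    have "tle H a (zero E) \<or> (a \<in> impl E \<and> tlt E a y)" "tle H b (zero E) \<or> (b \<in> impl E \<and> tlt E b y)"
      using hybr_lt_impl_iff[OF E] a b by blast+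
    then consider "tle H a (zero E)" "tle H b (zero E)" | "tle H a (zero E)" "b \<in> impl E"
      | "tle H b (zero E)" "a \<in> impl E" | "a \<in> impl E" "tlt E a y" "b \<in> impl E" "tlt E b y"
      by blast
    then show ?thesis
    proof cases
      case 1
      then show ?thesis using hybr_lt_linear_below_supp[OF zS, of a b] unfolding tle_def by blast
    next
      case 2 then show ?thesis using below_impl by blast
    next
      case 3 then show ?thesis using below_impl by blast
    next
      case 4
      then have "a = b \<or> tlt E a b \<or> tlt E b a"
        using tree_lt_linear_below[OF graft_tree[OF E(1)]] by blast
      then show ?thesis
        using hybr_lt_impl_iff[OF E(1), of a b] hybr_lt_impl_iff[OF E(1), of b a] 4 by blast
    qed
  qed
qed

text \<open>Below a support node \<open>y\<close> only finitely many grafts are rooted (their roots are distinct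
  predecessors of \<open>y\<close>), and each contributes the predecessors of finitely many maximal nodes.\<close>

lemma hybr_finite_preds_supp:
  assumes y: "y \<in> S"
  shows "finite (preds H y)"
proof -
  have yT: "y \<in> nodes T" using supp_in_T[OF y] .
  define Gy where "Gy = {G \<in> \<Gamma>. tlt T (zero G) y}"
  have "inj_on zero Gy" unfolding Gy_def inj_on_def using graft_zero_inj by blast
  moreover have "zero ` Gy \<subseteq> preds T y" unfolding Gy_def preds_def by blast
  moreover have "finite (zero ` Gy)" using finite_subset[OF _ finite_preds[OF yT]] calculation(2) .
  ultimately have finGy: "finite Gy" using finite_imageD by blast
  define M where "M G = {m \<in> maxs G. tle T m y}" for G
  have finM: "finite (M G)" for G
  proof (rule finite_subset[of _ "insert y (preds T y)"])
    show "M G \<subseteq> insert y (preds T y)" by (auto simp: M_def preds_def tle_def)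
  qed (simp add: finite_preds[OF yT])
  have sub: "preds H y \<subseteq> preds T y \<union> (\<Union>G\<in>Gy. \<Union>m\<in>M G. preds G m)"
  proof
    fix x assume "x \<in> preds H y"
    then have "tlt H x y" unfolding preds_def by simp
    then consider "x \<in> S" "tlt T x y"
      | G m where "G \<in> \<Gamma>" "x \<in> impl G" "m \<in> maxs G" "tle T m y" "tlt G x m"
      using hybr_lt_supp_iff[OF y] by blast
    then show "x \<in> preds T y \<union> (\<Union>G\<in>Gy. \<Union>m\<in>M G. preds G m)"
    proof cases
      case 1 then show ?thesis unfolding preds_def by simp
    next
      case 2
      have "tlt T (zero G) y"
        using graft_max_in_T[OF 2(1,3)] 2(4) tree_lt_trans[OF tree] unfolding tle_def by blast
      then have "G \<in> Gy" "m \<in> M G" using 2 unfolding Gy_def M_def by auto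
      moreover have "x \<in> preds G m" using 2(5) unfolding preds_def by simp
      ultimately show ?thesis by blast
    qed
  qed
  have "finite (\<Union>G\<in>Gy. \<Union>m\<in>M G. preds G m)"
  proof (intro finite_UN_I finGy finM)
    fix G m assume "G \<in> Gy" "m \<in> M G"
    then have "G \<in> \<Gamma>" "m \<in> nodes G" using maxsD[of m G] unfolding Gy_def M_def by auto
    then show "finite (preds G m)" using graft_finite_preds by blast
  qed
  then show ?thesis using finite_subset[OF sub] finite_preds[OF yT] by blast
qed

lemma hybr_finite_preds:
  assumes y: "y \<in> nodes H"
  shows "finite (preds H y)"
  using y
proof (rule hybr_node_cases)
  assume "y \<in> S" then show ?thesis using hybr_finite_preds_supp by blast
next
  fix E assume E: "E \<in> \<Gamma>" "y \<in> impl E"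
  have "preds H y \<subseteq> insert (zero E) (preds H (zero E)) \<union> preds E y"
  proof
    fix x assume "x \<in> preds H y"
    then have "tlt H x y" unfolding preds_def by simp
    then have "tle H x (zero E) \<or> (x \<in> impl E \<and> tlt E x y)"
      using hybr_lt_impl_iff[OF E, of x] by simp
    then show "x \<in> insert (zero E) (preds H (zero E)) \<union> preds E y"
      unfolding preds_def tle_def by blast
  qed
  moreover have "finite (preds E y)" using graft_finite_preds[OF E(1)] implD[OF E(2)] by blast
  ultimately show ?thesis
    using hybr_finite_preds_supp[OF zero_in_supp[OF E(1)]] finite_subset by blast
qed

lemma hybr_tree: "is_tree H"
  unfolding is_tree_def
proof (intro conjI allI impI ballI)
  show "x \<in> nodes H" "y \<in> nodes H" if "tlt H x y" for x y using hybr_lt_field that by blast+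
  show "\<not> tlt H x x" for x by (rule hybr_lt_irrefl)
  show "tlt H x z" if "tlt H x y" "tlt H y z" for x y z using hybr_lt_trans that by blast
  show "y = z \<or> tlt H y z \<or> tlt H z y" if "y \<in> preds H x" "z \<in> preds H x" for x y z
    using hybr_lt_linear_below that unfolding preds_def by blast
  fix x S' assume x: "x \<in> nodes H" and S': "S' \<subseteq> preds H x" "S' \<noteq> {}"
  show "\<exists>m\<in>S'. \<forall>s\<in>S'. \<not> tlt H s m"
  proof (rule finite_strict_order_has_minimal)
    show "finite S'" using finite_subset[OF S'(1) hybr_finite_preds[OF x]] .
    show "S' \<noteq> {}" by (rule S'(2))
    show "\<not> tlt H y y" for y by (rule hybr_lt_irrefl)
    show "tlt H y z \<Longrightarrow> tlt H z w \<Longrightarrow> tlt H y w" for y z w by (rule hybr_lt_trans)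
  qed
qed

lemma zero_T_in_supp: "zero T \<in> S"
  unfolding supp_iff
proof (intro conjI ballI impI)
  show "zero T \<in> nodes T" using zero_le(1) .
  fix G assume G: "G \<in> \<Gamma>" "tlt T (zero G) (zero T)"
  have "tle T (zero T) (zero G)" using zero_le(2) graft_zero_in_T[OF G(1)] by blast
  then consider "zero T = zero G" | "tlt T (zero T) (zero G)" unfolding tle_def by blast
  then have False
  proof cases
    case 1 then show False using G(2) tree_lt_irrefl[OF tree] by simp
  next
    case 2 then show False using G(2) tree_lt_asym[OF tree] by blast
  qed
  then show "\<exists>m\<in>maxs G. tle T m (zero T)" by blast
qed

lemma zero_hybr_le:
  assumes y: "y \<in> nodes H"
  shows "tle H (zero T) y"
  using y
proof (rule hybr_node_cases)
  assume yS: "y \<in> S"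
  then have "tle T (zero T) y" using zero_le(2) supp_in_T by blast
  then show ?thesis using hybr_lt_supp_supp_iff[OF yS zero_T_in_supp] unfolding tle_def by blast
next
  fix E assume E: "E \<in> \<Gamma>" "y \<in> impl E"
  have "tle T (zero T) (zero E)" using zero_le(2) graft_zero_in_T[OF E(1)] by blast
  then have "tle H (zero T) (zero E)"
    using hybr_lt_supp_supp_iff[OF zero_in_supp[OF E(1)] zero_T_in_supp] unfolding tle_def by blast
  then show ?thesis using hybr_lt_impl_iff[OF E] unfolding tle_def by blast
qed

lemma zero_T_in_hybr: "zero T \<in> nodes H"
  using zero_T_in_supp unfolding hybr_nodes by blast

lemma zero_hybr: "zero H = zero T"
  using zero_eqI[OF hybr_tree zero_T_in_hybr] zero_hybr_le by blast

section \<open>Sons in the hybrid tree\<close>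

lemma graft_nodes_subset_hybr: "G \<in> \<Gamma> \<Longrightarrow> nodes G \<subseteq> nodes H"
  using graft_node_cases zero_in_supp max_in_supp unfolding hybr_nodes by blast

lemma graft_zero_hybr_lt:
  assumes G: "G \<in> \<Gamma>" and v: "v \<in> nodes G" "v \<noteq> zero G"
  shows "tlt H (zero G) v"
proof -
  consider "v \<in> maxs G" | "v \<in> impl G" using graft_node_cases[OF G v(1)] v(2) by blast
  then show ?thesis
  proof cases
    case 1 then show ?thesis
      using hybr_lt_supp_supp_iff[OF max_in_supp[OF G 1] zero_in_supp[OF G]] graft_max_in_T[OF G 1]
      by blast
  next
    case 2 then show ?thesis using hybr_lt_impl_iff[OF G 2, of "zero G"] by (simp add: tle_def)
  qed
qed

lemma not_hybr_lt_below_graft_zero: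
  assumes G: "G \<in> \<Gamma>" and x: "x \<in> nodes G"
  shows "\<not> tlt H x (zero G)"
proof (cases "x = zero G")
  case False then show ?thesis using graft_zero_hybr_lt[OF G x] hybr_lt_asym by blast
qed (simp add: hybr_lt_irrefl)

lemma not_hybr_lt_from_graft_max:
  assumes G: "G \<in> \<Gamma>" and u: "u \<in> maxs G" and v: "v \<in> nodes G"
  shows "\<not> tlt H u v"
proof
  assume uv: "tlt H u v"
  have uS: "u \<in> S" using max_in_supp[OF G u] .
  consider "v = zero G" | "v \<in> maxs G" | "v \<in> impl G" using graft_node_cases[OF G v] by blast
  then show False
  proof cases
    case 1 then show False using not_hybr_lt_below_graft_zero[OF G] maxsD[OF u] uv by simp
  next
    case vm: 2
    then have "tlt T u v" using hybr_lt_supp_supp_iff[OF max_in_supp[OF G vm] uS] uv by blast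
    then show False
      using graft_maxs_eq[OF G u vm, of v] tree_lt_irrefl[OF tree] unfolding tle_def by blast
  next
    case 3
    then have "tle H u (zero G)"
      using hybr_lt_impl_iff[OF G 3, of u] uv impl_notin_supp[OF G] uS by blast
    then show False
      using not_hybr_lt_below_graft_zero[OF G] maxsD[OF u] graft_zero_not_max[OF G] u
        unfolding tle_def by blast
  qed
qed

lemma graft_hybr_lt_iff:
  assumes G: "G \<in> \<Gamma>" and u: "u \<in> nodes G" and v: "v \<in> nodes G"
  shows "tlt H u v \<longleftrightarrow> tlt G u v"
proof -
  have GT: "is_tree G" using graft_tree[OF G] .
  consider "u = zero G" | "u \<in> maxs G" | "u \<in> impl G" using graft_node_cases[OF G u] by blast
  then show ?thesis
  proof cases
    case 1
    then show ?thesis using graft_zero_hybr_lt[OF G v] graft_zero_lt[OF G v] hybr_lt_irrefl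
      tree_lt_irrefl[OF GT] by blast
  next
    case 2 then show ?thesis using not_hybr_lt_from_graft_max[OF G 2 v] maxsD[OF 2] by blast
  next
    case 3
    consider "v = zero G" | "v \<in> maxs G" | "v \<in> impl G" using graft_node_cases[OF G v] by blast
    then show ?thesis
    proof cases
      case 1 then show ?thesis
        using not_hybr_lt_impl_zero[OF G 3] graft_zero(2)[OF G u] tree_lt_asym[OF GT]
          tree_lt_irrefl[OF GT] unfolding tle_def by blast
    next
      case 2
      have "(\<exists>m\<in>maxs G. tle T m v \<and> tlt G u m) \<longleftrightarrow> tlt G u v"
        using graft_maxs_eq[OF G _ 2 _ , of _ v] 2 unfolding tle_def by blast
      then show ?thesis using hybr_lt_impl_supp_iff[OF max_in_supp[OF G 2] G 3] by blast
    next
      case vi: 3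
      have "\<not> tle H u (zero G)"
        using not_hybr_lt_impl_zero[OF G 3] zero_in_supp[OF G] impl_notin_supp[OF G 3]
        unfolding tle_def by blast
      then show ?thesis using hybr_lt_impl_iff[OF G vi, of u] 3 by blast
    qed
  qed
qed

lemma hybr_between_graft_zero_and_max:
  assumes G: "G \<in> \<Gamma>" and zw: "tlt H (zero G) w" and ws: "tlt H w s" and sm: "s \<in> maxs G"
  shows "w \<in> impl G"
proof -
  have zS: "zero G \<in> S" using zero_in_supp[OF G] .
  have sS: "s \<in> S" using max_in_supp[OF G sm] .
  have not_max_below_s: "\<not> tlt T k s" if k: "k \<in> maxs G" for k
  proof
    assume ks: "tlt T k s"
    then have "k = s" using graft_maxs_eq[OF G k sm, of s] by (simp add: tle_def)
    then show False using ks tree_lt_irrefl[OF tree] by simp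
  qed
  consider "w \<in> S" "tlt T w s" | E m where "E \<in> \<Gamma>" "w \<in> impl E" "m \<in> maxs E" "tle T m s" "tlt E w m"
    using hybr_lt_supp_iff[OF sS] ws by blast
  then show ?thesis
  proof cases
    case 1
    have "tlt T (zero G) w" using hybr_lt_supp_supp_iff[OF 1(1) zS] zw by blast
    then obtain k where k: "k \<in> maxs G" "tle T k w" using supp_above_zero[OF 1(1) G] by blast
    then show ?thesis using not_max_below_s[OF k(1)] tree_le_lt_trans[OF tree k(2) 1(2)] by simp
  next
    case 2
    show ?thesis
    proof (rule ccontr)
      assume "w \<notin> impl G"
      then have EG: "E \<noteq> G" using 2(2) by blast
      have "tle H (zero G) (zero E)"
        using hybr_lt_impl_iff[OF 2(1,2), of "zero G"] zw impl_notin_supp[OF 2(1)] zS by blast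
      moreover have "zero G \<noteq> zero E" using graft_zero_inj[OF G 2(1)] EG by blast
      ultimately have "tlt T (zero G) (zero E)"
        using hybr_lt_supp_supp_iff[OF zero_in_supp[OF 2(1)] zS] unfolding tle_def by blast
      then obtain k where k: "k \<in> maxs G" "tle T k (zero E)"
        using supp_above_zero[OF zero_in_supp[OF 2(1)] G] by blast
      have "tlt T (zero E) s"
        using tree_lt_le_trans[OF tree conjunct2[OF graft_max_in_T[OF 2(1,3)]] 2(4)] .
      then show False using not_max_below_s[OF k(1)] tree_le_lt_trans[OF tree k(2)] by simp
    qed
  qed
qed

lemma hybr_between_graft_nodes:
  assumes G: "G \<in> \<Gamma>" and zw: "tlt H (zero G) w" and ws: "tlt H w s" and s: "s \<in> nodes G"
  shows "w \<in> nodes G"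
proof -
  consider "s = zero G" | "s \<in> maxs G" | "s \<in> impl G" using graft_node_cases[OF G s] by blast
  then show ?thesis
  proof cases
    case 1 then show ?thesis using hybr_lt_asym[OF zw] ws by simp
  next
    case 2
    then have "w \<in> impl G" using hybr_between_graft_zero_and_max[OF G zw ws] by blast
    then show ?thesis using implD[of w G] by simp
  next
    case 3
    then have "tle H w (zero G) \<or> w \<in> impl G" using hybr_lt_impl_iff[OF G 3, of w] ws by auto
    moreover have "\<not> tle H w (zero G)"
      unfolding tle_def using hybr_lt_asym[OF zw] zw hybr_lt_irrefl[of w] by auto
    ultimately have "w \<in> impl G" by simp
    then show ?thesis using implD[of w G] by simp
  qed
qed

lemma graft_inner_node_cases:
  "G \<in> \<Gamma> \<Longrightarrow> y \<in> nodes G - maxs G \<Longrightarrow> y = zero G \<or> y \<in> impl G"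
  using graft_node_cases[of G y] by blast

lemma hybr_lt_graft_node_supp:
  assumes G: "G \<in> \<Gamma>" and y: "y \<in> nodes G - maxs G" and s: "s \<in> S" and ys: "tlt H y s"
  shows "\<exists>v\<in>nodes G. tlt G y v \<and> tle H v s"
proof -
  have "\<exists>m\<in>maxs G. tlt G y m \<and> tle T m s"
    using graft_inner_node_cases[OF G y]
  proof
    assume y0: "y = zero G"
    then have "tlt T (zero G) s" using hybr_lt_supp_supp_iff[OF s zero_in_supp[OF G]] ys by blast
    then show ?thesis using supp_above_zero[OF s G] max_gt_zero[OF G] y0 by blast
  next
    assume "y \<in> impl G"
    then show ?thesis using hybr_lt_impl_supp_iff[OF s G] ys by blast
  qed
  then obtain m where m: "m \<in> maxs G" "tlt G y m" "tle T m s" by blast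
  have "tle H m s"
    using hybr_lt_supp_supp_iff[OF s max_in_supp[OF G m(1)]] m(3) unfolding tle_def by blast
  then show ?thesis using m(1,2) maxsD[OF m(1)] by blast
qed

lemma hybr_lt_graft_node:
  assumes G: "G \<in> \<Gamma>" and y: "y \<in> nodes G - maxs G" and ys: "tlt H y s"
  shows "\<exists>v\<in>nodes G. tlt G y v \<and> tle H v s"
proof -
  have "s \<in> nodes H" using hybr_lt_field(2)[OF ys] .
  then show ?thesis
  proof (rule hybr_node_cases)
    assume "s \<in> S" then show ?thesis using hybr_lt_graft_node_supp[OF G y _ ys] by blast
  next
    fix E assume E: "E \<in> \<Gamma>" "s \<in> impl E"
    have y_cases: "y = zero G \<or> y \<in> impl G" using graft_inner_node_cases[OF G y] .
    consider "y = zero E" | "tlt H y (zero E)" | "y \<in> impl E" "tlt E y s"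
      using hybr_lt_impl_iff[OF E] ys unfolding tle_def by blast
    then show ?thesis
    proof cases
      case 1
      then have "y = zero G" using y_cases zero_in_supp[OF E(1)] impl_notin_supp[OF G, of y] by auto
      then have "G = E" using graft_zero_inj[OF G E(1)] 1 by argo
      then have "s \<in> nodes G" "tlt G y s" using implD[OF E(2)] impl_gt_zero[OF E] 1 by auto
      then show ?thesis unfolding tle_def by blast
    next
      case 2
      then obtain v where v: "v \<in> nodes G" "tlt G y v" "tle H v (zero E)"
        using hybr_lt_graft_node_supp[OF G y zero_in_supp[OF E(1)]] by blast
      moreover have "tle H (zero E) s"
        using hybr_lt_impl_iff[OF E, of "zero E"] unfolding tle_def by blast
      ultimately show ?thesis using tree_le_trans[OF hybr_tree v(3)] by blast
    next
      case 3
      then have "y \<in> impl G" using y_cases impl_notin_supp[OF E(1)] zero_in_supp[OF G] by auto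
      then have "E = G" using impl_unique[OF E(1) G 3(1)] by blast
      then show ?thesis using 3(2) implD[OF E(2)] unfolding tle_def by auto
    qed
  qed
qed

lemma sons_hybr_graft:
  assumes G: "G \<in> \<Gamma>" and y: "y \<in> nodes G - maxs G"
  shows "sons H y = sons G y"
proof
  have GT: "is_tree G" using graft_tree[OF G] .
  have yn: "y \<in> nodes G" using y by blast
  show "sons H y \<subseteq> sons G y"
  proof
    fix s assume s: "s \<in> sons H y"
    obtain v where v: "v \<in> nodes G" "tlt G y v" "tle H v s"
      using hybr_lt_graft_node[OF G y] sonsD[OF s] by blast
    have "tlt H y v" using graft_hybr_lt_iff[OF G yn v(1)] v(2) by blast
    then have "v = s" using v(3) sonsD[OF s] unfolding tle_def by blast
    show "s \<in> sons G y"
    proof (rule sonsI)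
      show "s \<in> nodes G" "tlt G y s" using v \<open>v = s\<close> by auto
      fix w assume "tlt G y w" "tlt G w s"
      then show False using graft_hybr_lt_iff[OF G] tree_lt_field[OF GT] sonsD[OF s] by blast
    qed
  qed
  show "sons G y \<subseteq> sons H y"
  proof
    fix s assume s: "s \<in> sons G y"
    then have sn: "s \<in> nodes G" and ys: "tlt G y s" using sonsD[OF s] by blast+
    have zy: "tle H (zero G) y"
      using graft_zero(2)[OF G yn] graft_hybr_lt_iff[OF G graft_zero(1)[OF G] yn]
        unfolding tle_def by blast
    show "s \<in> sons H y"
    proof (rule sonsI)
      show "s \<in> nodes H" using graft_nodes_subset_hybr[OF G] sn by blast
      show "tlt H y s" using graft_hybr_lt_iff[OF G yn sn] ys by blast
      fix w assume yw: "tlt H y w" and ws: "tlt H w s"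
      have "w \<in> nodes G"
        using hybr_between_graft_nodes[OF G tree_le_lt_trans[OF hybr_tree zy yw] ws sn] .
      then show False using graft_hybr_lt_iff[OF G] yn sn yw ws sonsD[OF s] by blast
    qed
  qed
qed

lemma son_of_supp_in_supp:
  assumes y: "y \<in> S" and nz: "\<forall>G\<in>\<Gamma>. y \<noteq> zero G" and s: "s \<in> sons T y"
  shows "s \<in> S"
  unfolding supp_iff
proof (intro conjI ballI impI)
  have ys: "tlt T y s" using sonsD[OF s] by blast
  show "s \<in> nodes T" using sonsD[OF s] by blast
  fix G assume G: "G \<in> \<Gamma>" and zs: "tlt T (zero G) s"
  consider "zero G = y" | "tlt T (zero G) y" | "tlt T y (zero G)"
    using tree_lt_linear_below[OF tree zs ys] by blast
  then show "\<exists>m\<in>maxs G. tle T m s"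
  proof cases
    case 1 then show ?thesis using nz G by auto
  next
    case 2
    then obtain m where "m \<in> maxs G" "tle T m y" using supp_above_zero[OF y G] by blast
    then show ?thesis using tree_le_trans[OF tree _ ] ys unfolding tle_def by blast
  next
    case 3 then show ?thesis using sonsD[OF s] zs by blast
  qed
qed

lemma hybr_lt_supp_node:
  assumes y: "y \<in> S" and nz: "\<forall>G\<in>\<Gamma>. y \<noteq> zero G" and ys: "tlt H y s"
  shows "\<exists>v\<in>S. tlt T y v \<and> tle H v s"
proof -
  have "s \<in> nodes H" using hybr_lt_field(2)[OF ys] .
  then show ?thesis
  proof (rule hybr_node_cases)
    assume "s \<in> S" then show ?thesis
      using hybr_lt_supp_supp_iff[OF _ y] ys unfolding tle_def by blast
  next
    fix E assume E: "E \<in> \<Gamma>" "s \<in> impl E"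
    have "tle H y (zero E)"
      using hybr_lt_impl_iff[OF E, of y] ys impl_notin_supp[OF E(1)] y by blast
    then have "tlt H y (zero E)" using nz E(1) unfolding tle_def by auto
    then have "tlt T y (zero E)" using hybr_lt_supp_supp_iff[OF zero_in_supp[OF E(1)] y] by blast
    moreover have "tle H (zero E) s"
      using hybr_lt_impl_iff[OF E, of "zero E"] unfolding tle_def by blast
    ultimately show ?thesis using zero_in_supp[OF E(1)] by blast
  qed
qed

lemma graft_zero_between_supp:
  assumes y: "y \<in> S" and nz: "\<forall>G\<in>\<Gamma>. y \<noteq> zero G"
    and yw: "tlt T y w" and ws: "tlt T w s" and w: "w \<notin> S"
  shows "\<exists>G\<in>\<Gamma>. tlt T y (zero G) \<and> tlt T (zero G) s"
proof -
  obtain G where G: "G \<in> \<Gamma>" "tlt T (zero G) w" "\<not> (\<exists>m\<in>maxs G. tle T m w)"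
    using w tree_lt_field(2)[OF tree yw] supp_iff by blast
  consider "zero G = y" | "tlt T (zero G) y" | "tlt T y (zero G)"
    using tree_lt_linear_below[OF tree G(2) yw] by blast
  then show ?thesis
  proof cases
    case 1 then show ?thesis using nz G(1) by auto
  next
    case 2
    then obtain m where m: "m \<in> maxs G" "tle T m y" using supp_above_zero[OF y G(1)] by blast
    then have "tlt T m w" using tree_le_lt_trans[OF tree m(2) yw] by blast
    then show ?thesis using G(3) m(1) unfolding tle_def by blast
  next
    case 3 then show ?thesis using G(1) tree_lt_trans[OF tree G(2) ws] by blast
  qed
qed

lemma sons_hybr_subset_sons_supp:
  assumes y: "y \<in> S" and nz: "\<forall>G\<in>\<Gamma>. y \<noteq> zero G"
  shows "sons H y \<subseteq> sons T y"
proof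
  fix s assume s: "s \<in> sons H y"
  obtain v where v: "v \<in> S" "tlt T y v" "tle H v s"
    using hybr_lt_supp_node[OF y nz] sonsD[OF s] by blast
  have "tlt H y v" using hybr_lt_supp_supp_iff[OF v(1) y] v(2) by blast
  then have "v = s" using v(3) sonsD[OF s] unfolding tle_def by blast
  then have sS: "s \<in> S" and ys: "tlt T y s" using v by auto
  have not_between: "\<not> (tlt T y u \<and> tlt T u s)" if "u \<in> S" for u
    using hybr_lt_supp_supp_iff[OF that y] hybr_lt_supp_supp_iff[OF sS that] sonsD[OF s] by blast
  show "s \<in> sons T y"
  proof (rule sonsI)
    show "s \<in> nodes T" "tlt T y s" using supp_in_T[OF sS] ys by auto
    fix w assume yw: "tlt T y w" and ws: "tlt T w s"
    show False
    proof (cases "w \<in> S")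
      case True then show False using not_between yw ws by blast
    next
      case False
      then show False
        using graft_zero_between_supp[OF y nz yw ws] not_between zero_in_supp by blast
    qed
  qed
qed

lemma sons_supp_subset_sons_hybr:
  assumes y: "y \<in> S" and nz: "\<forall>G\<in>\<Gamma>. y \<noteq> zero G"
  shows "sons T y \<subseteq> sons H y"
proof
  fix s assume s: "s \<in> sons T y"
  have sS: "s \<in> S" using son_of_supp_in_supp[OF y nz s] .
  show "s \<in> sons H y"
  proof (rule sonsI)
    show "s \<in> nodes H" using sS unfolding hybr_nodes by blast
    show "tlt H y s" using hybr_lt_supp_supp_iff[OF sS y] sonsD[OF s] by blast
    fix w assume yw: "tlt H y w" and ws: "tlt H w s"
    obtain v where v: "v \<in> S" "tlt T y v" "tle H v w" using hybr_lt_supp_node[OF y nz yw] by blast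
    have "tlt H v s" using tree_le_lt_trans[OF hybr_tree v(3) ws] .
    then have "tlt T v s" using hybr_lt_supp_supp_iff[OF sS v(1)] by blast
    then show False using v(2) sonsD[OF s] by blast
  qed
qed

lemma sons_hybr_supp:
  assumes "y \<in> S" and "\<forall>G\<in>\<Gamma>. y \<noteq> zero G"
  shows "sons H y = sons T y"
  using sons_hybr_subset_sons_supp[OF assms] sons_supp_subset_sons_hybr[OF assms] by blast

lemma hybr_sons_eqpoll:
  assumes y: "y \<in> nodes H"
  shows "sons H y \<approx> (UNIV :: nat set)"
proof -
  have graft_case: "sons H y \<approx> (UNIV :: nat set)" if G: "G \<in> \<Gamma>" "y \<in> nodes G - maxs G" for G
    using sons_hybr_graft[OF G] grafts_aleph0[OF G(1)] G(2) unfolding aleph0_branching_def by simp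
  show ?thesis
    using y
  proof (rule hybr_node_cases)
    assume yS: "y \<in> S"
    show ?thesis
    proof (cases "\<exists>G\<in>\<Gamma>. y = zero G")
      case True
      then obtain G where G: "G \<in> \<Gamma>" "y = zero G" by blast
      then have "y \<in> nodes G - maxs G"
        using graft_zero(1)[OF G(1)] graft_zero_not_max[OF G(1)] by simp
      then show ?thesis using graft_case[OF G(1)] by blast
    next
      case False
      then show ?thesis using sons_hybr_supp[OF yS] sons_eqpoll_nat supp_in_T[OF yS] by simp
    qed
  next
    fix E assume E: "E \<in> \<Gamma>" "y \<in> impl E"
    then show ?thesis using graft_case[OF E(1)] implD[OF E(2)] by blast
  qed
qed

lemma hybr_sons_nonempty: "y \<in> nodes H \<Longrightarrow> sons H y \<noteq> {}"
  using hybr_sons_eqpoll eqpoll_iff_bijections by (metis UNIV_I empty_iff)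

lemma hybr_baire_skeleton: "baire_skeleton H"
proof (rule baire_skeleton_if_aleph0_sons[OF hybr_tree zero_T_in_hybr])
  show "\<forall>y\<in>nodes H. tle H (zero T) y" using zero_hybr_le by blast
  show "\<forall>x\<in>nodes H. finite (preds H x)" using hybr_finite_preds by blast
  show "\<forall>x\<in>nodes H. sons H x \<approx> (UNIV :: nat set)" using hybr_sons_eqpoll by blast
qed

end

section \<open>Foliage hybrids\<close>

locale foliage_hybrid = hybrid T "skel ` \<phi>" for T :: "'a tree" and \<phi> :: "('a, 'b) ftree set" +
  fixes F :: "('a, 'b) ftree" and X :: "'b topology"
  assumes skel_F: "skel F = T"
    and F_baire: "baire_ftree X F"
    and fgrafts: "\<And>G. G \<in> \<phi> \<Longrightarrow> is_fgraft F G"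
    and skel_inj: "inj_on skel \<phi>"
    and grafts_locally_strict: "\<And>G. G \<in> \<phi> \<Longrightarrow> locally_strict G"
    and grafts_open: "\<And>G. G \<in> \<phi> \<Longrightarrow> open_in X G"
    and grafts_bounded_chains: "\<And>G. G \<in> \<phi> \<Longrightarrow> bounded_chains (skel G)"
begin

abbreviation "L \<equiv> loss F \<phi>"
abbreviation "Hf \<equiv> fhybr F \<phi>"

lemma skel_fhybr: "skel Hf = H"
  using skel_F unfolding fhybr_def skel_def by simp

lemma F_locally_strict: "locally_strict F"
  using F_baire unfolding baire_ftree_def by blast

lemma F_nonincreasing: "nonincreasing F"
  using nonincreasing_if_locally_strict[OF F_locally_strict skel_F] .

lemma F_open: "open_in X F"
  using F_baire unfolding baire_ftree_def by blast

lemma F_strict_branches: "strict_branches F"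
  using F_baire unfolding baire_ftree_def by blast

lemma F_root_leaf: "leaf F (zero T) = topspace X"
  using F_baire zero_eq_node_Nil skel_F unfolding baire_ftree_def by simp

lemma graft_nonincreasing: "G \<in> \<phi> \<Longrightarrow> nonincreasing G"
  using fgrafts unfolding is_fgraft_def by blast

lemma graft_zero_leaf: "G \<in> \<phi> \<Longrightarrow> leaf G (zero (skel G)) \<subseteq> leaf F (zero (skel G))"
  using fgrafts unfolding is_fgraft_def by blast

lemma graft_max_leaf: "G \<in> \<phi> \<Longrightarrow> m \<in> maxs (skel G) \<Longrightarrow> leaf G m = leaf F m"
  using fgrafts unfolding is_fgraft_def by blast

lemma cut_subset_loss: "G \<in> \<phi> \<Longrightarrow> cut F G \<subseteq> L"
  unfolding loss_def by blast

lemma leaf_fhybr_supp: "x \<in> S \<Longrightarrow> leaf Hf x = leaf F x - L"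
  unfolding fhybr_def leaf_def fsupp_def skel_F by simp

lemma leaf_fhybr_impl:
  assumes G: "G \<in> \<phi>" and x: "x \<in> impl (skel G)"
  shows "leaf Hf x = leaf G x - L"
proof -
  have Gs: "skel G \<in> skel ` \<phi>" using G by blast
  have xS: "x \<notin> fsupp F \<phi>" using impl_notin_supp[OF Gs x] unfolding fsupp_def skel_F by simp
  have "(THE G'. G' \<in> \<phi> \<and> x \<in> impl (skel G')) = G"
  proof (rule the_equality)
    show "G \<in> \<phi> \<and> x \<in> impl (skel G)" using G x by blast
    fix G' assume G': "G' \<in> \<phi> \<and> x \<in> impl (skel G')"
    then have "skel G' = skel G" using impl_unique[OF _ Gs _ x, of "skel G'"] by blast
    then show "G' = G" using skel_inj G G' unfolding inj_on_def by blast
  qed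
  then show ?thesis using xS unfolding fhybr_def leaf_def by simp
qed

lemma leaf_fhybr_graft:
  assumes G: "G \<in> \<phi>" and x: "x \<in> nodes (skel G)"
  shows "leaf Hf x = leaf G x - L"
proof -
  have Gs: "skel G \<in> skel ` \<phi>" using G by blast
  consider "x = zero (skel G)" | "x \<in> maxs (skel G)" | "x \<in> impl (skel G)"
    using graft_node_cases[OF Gs x] by blast
  then show ?thesis
  proof cases
    case 1
    have "leaf Hf x = leaf F x - L" using leaf_fhybr_supp zero_in_supp[OF Gs] 1 by simp
    moreover have "leaf F x - L = leaf G x - L"
      using graft_zero_leaf[OF G] cut_subset_loss[OF G] 1 unfolding cut_def by blast
    ultimately show ?thesis by simp
  next
    case 2 then show ?thesis
      using leaf_fhybr_supp max_in_supp[OF Gs 2] graft_max_leaf[OF G 2] by simp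
  next
    case 3 then show ?thesis using leaf_fhybr_impl[OF G] by simp
  qed
qed

lemma fhybr_locally_strict_at_transfer:
  assumes sn: "sons H x = sons (skel A) x" and x: "x \<in> nodes (skel A) - maxs (skel A)"
    and ls: "locally_strict A"
    and lf: "\<And>y. y \<in> insert x (sons (skel A) x) \<Longrightarrow> leaf Hf y = leaf A y - L"
  shows "disjoint_family_on (leaf Hf) (sons H x) \<and> leaf Hf x = (\<Union>s\<in>sons H x. leaf Hf s)"
proof -
  have d: "disjoint_family_on (leaf A) (sons (skel A) x)"
    and u: "leaf A x = (\<Union>s\<in>sons (skel A) x. leaf A s)"
    using ls x unfolding locally_strict_def by blast+
  have "disjoint_family_on (leaf Hf) (sons H x)"
    unfolding disjoint_family_on_def
  proof (intro ballI impI)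
    fix a b assume a: "a \<in> sons H x" and b: "b \<in> sons H x" and ab: "a \<noteq> b"
    have "leaf A a \<inter> leaf A b = {}" using d a b ab sn unfolding disjoint_family_on_def by blast
    then show "leaf Hf a \<inter> leaf Hf b = {}" using lf a b sn by auto
  qed
  moreover have "leaf Hf x = (\<Union>s\<in>sons H x. leaf Hf s)"
  proof -
    have "leaf Hf x = leaf A x - L" using lf by simp
    also have "\<dots> = (\<Union>s\<in>sons (skel A) x. leaf A s - L)" using u by blast
    also have "\<dots> = (\<Union>s\<in>sons H x. leaf Hf s)" using lf sn by simp
    finally show ?thesis .
  qed
  ultimately show ?thesis by blast
qed

lemma fhybr_locally_strict_graft:
  assumes G: "G \<in> \<phi>" and x: "x \<in> nodes (skel G) - maxs (skel G)"
  shows "disjoint_family_on (leaf Hf) (sons H x) \<and> leaf Hf x = (\<Union>s\<in>sons H x. leaf Hf s)"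
proof (rule fhybr_locally_strict_at_transfer)
  have Gs: "skel G \<in> skel ` \<phi>" using G by blast
  show "sons H x = sons (skel G) x" using sons_hybr_graft[OF Gs x] .
  show "x \<in> nodes (skel G) - maxs (skel G)" by (rule x)
  show "locally_strict G" using grafts_locally_strict[OF G] .
  fix y assume "y \<in> insert x (sons (skel G) x)"
  then have "y \<in> nodes (skel G)" using x by (auto dest: sonsD)
  then show "leaf Hf y = leaf G y - L" using leaf_fhybr_graft[OF G] by simp
qed

lemma fhybr_locally_strict_supp:
  assumes x: "x \<in> S" and nz: "\<forall>G\<in>skel ` \<phi>. x \<noteq> zero G"
  shows "disjoint_family_on (leaf Hf) (sons H x) \<and> leaf Hf x = (\<Union>s\<in>sons H x. leaf Hf s)"
proof (rule fhybr_locally_strict_at_transfer)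
  show "sons H x = sons (skel F) x" using sons_hybr_supp[OF x nz] skel_F by simp
  show "x \<in> nodes (skel F) - maxs (skel F)" using supp_in_T[OF x] maxs_empty skel_F by simp
  show "locally_strict F" using F_locally_strict .
  fix y assume "y \<in> insert x (sons (skel F) x)"
  then have "y \<in> S" using x son_of_supp_in_supp[OF x nz] skel_F by auto
  then show "leaf Hf y = leaf F y - L" using leaf_fhybr_supp by simp
qed

lemma fhybr_locally_strict: "locally_strict Hf"
  unfolding locally_strict_def skel_fhybr
proof (intro ballI)
  fix x assume "x \<in> nodes H - maxs H"
  then have x: "x \<in> nodes H" by blast
  show "disjoint_family_on (leaf Hf) (sons H x) \<and> leaf Hf x = (\<Union>s\<in>sons H x. leaf Hf s)"
    using x
  proof (rule hybr_node_cases)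
    assume xS: "x \<in> S"
    show ?thesis
    proof (cases "\<exists>G\<in>\<phi>. x = zero (skel G)")
      case True
      then obtain G where G: "G \<in> \<phi>" "x = zero (skel G)" by blast
      have Gs: "skel G \<in> skel ` \<phi>" using G by blast
      show ?thesis
        using fhybr_locally_strict_graft[OF G(1)] graft_zero(1)[OF Gs] graft_zero_not_max[OF Gs]
          G(2)
        by simp
    next
      case False
      then show ?thesis using fhybr_locally_strict_supp[OF xS] by blast
    qed
  next
    fix E assume E: "E \<in> skel ` \<phi>" "x \<in> impl E"
    then obtain G where G: "G \<in> \<phi>" "E = skel G" by blast
    then show ?thesis using fhybr_locally_strict_graft[OF G(1)] implD[OF E(2)] by simp
  qed
qed

lemma fhybr_open: "open_in (subtopology X (topspace X - L)) Hf"
  unfolding open_in_def skel_fhybr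
proof
  fix x assume x: "x \<in> nodes H"
  have "\<exists>A. openin X A \<and> leaf Hf x = A - L"
    using x
  proof (rule hybr_node_cases)
    assume xS: "x \<in> S"
    have "openin X (leaf F x)" using F_open supp_in_T[OF xS] skel_F unfolding open_in_def by blast
    then show ?thesis using leaf_fhybr_supp[OF xS] by blast
  next
    fix E assume E: "E \<in> skel ` \<phi>" "x \<in> impl E"
    then obtain G where G: "G \<in> \<phi>" "E = skel G" by blast
    have "openin X (leaf G x)"
      using grafts_open[OF G(1)] implD[OF E(2)] G(2) unfolding open_in_def by blast
    then show ?thesis using leaf_fhybr_impl[OF G(1)] E(2) G(2) by blast
  qed
  then obtain A where A: "openin X A" "leaf Hf x = A - L" by blast
  have "A - L = (topspace X - L) \<inter> A" using openin_subset[OF A(1)] by blast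
  then show "openin (subtopology X (topspace X - L)) (leaf Hf x)"
    using openin_subtopology_Int2[OF A(1), of "topspace X - L"] A(2) by simp
qed

lemma fhybr_root_leaf: "leaf Hf (zero (skel Hf)) = topspace (subtopology X (topspace X - L))"
  using skel_fhybr zero_hybr leaf_fhybr_supp[OF zero_T_in_supp] F_root_leaf by auto

lemma branch_tail_in_graft:
  assumes B: "is_branch H B" and b: "b \<in> B" and G0: "G0 \<in> skel ` \<phi>" "b \<in> impl G0"
    and no_supp: "\<not> (\<exists>c\<in>B \<inter> S. tle H b c)"
  shows "{w \<in> B. tle H b w} \<subseteq> impl G0"
proof
  fix w assume "w \<in> {w \<in> B. tle H b w}"
  then have wB: "w \<in> B" and bw: "tle H b w" by auto
  have "w \<notin> S" using no_supp wB bw by blast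
  moreover have "w \<in> nodes H" using branch_subset[OF B] wB by blast
  ultimately obtain E where E: "E \<in> skel ` \<phi>" "w \<in> impl E" unfolding hybr_nodes by blast
  show "w \<in> impl G0"
  proof (cases "w = b")
    case False
    then have "tle H b (zero E) \<or> b \<in> impl E"
      using bw hybr_lt_impl_iff[OF E, of b] unfolding tle_def by blast
    then show ?thesis
    proof
      assume bz: "tle H b (zero E)"
      have "tle H (zero E) w" using hybr_lt_impl_iff[OF E, of "zero E"] unfolding tle_def by blast
      then have "zero E \<in> B"
        using branch_downward_closed[OF hybr_tree B wB] wB unfolding tle_def by blast
      then show ?thesis using no_supp zero_in_supp[OF E(1)] bz by blast
    next
      assume "b \<in> impl E"
      then show ?thesis using impl_unique[OF E(1) G0(1) _ G0(2)] E(2) by blast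
    qed
  qed (use G0 in simp)
qed

lemma branch_tail_finite_in_graft:
  assumes B: "is_branch H B" and b: "b \<in> B" and G0: "G0 \<in> skel ` \<phi>" "b \<in> impl G0"
    and no_supp: "\<not> (\<exists>c\<in>B \<inter> S. tle H b c)"
  shows "finite {w \<in> B. tle H b w}"
proof -
  let ?K = "{w \<in> B. tle H b w}"
  have KI: "?K \<subseteq> impl G0" using branch_tail_in_graft[OF assms] .
  have "is_chain G0 ?K"
    unfolding is_chain_def
  proof (intro conjI ballI)
    show "?K \<subseteq> nodes G0" using KI implD[of _ G0] by blast
    fix u v assume "u \<in> ?K" "v \<in> ?K"
    then have uv: "u \<in> nodes G0" "v \<in> nodes G0" and "tle H u v \<or> tle H v u"
      using KI implD[of u G0] implD[of v G0] branch_chain[OF B, of u v] by auto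
    then show "tle G0 u v \<or> tle G0 v u"
      using graft_hybr_lt_iff[OF G0(1) uv] graft_hybr_lt_iff[OF G0(1) uv(2,1)]
        unfolding tle_def by blast
  qed
  moreover have "?K \<noteq> {}" using b unfolding tle_def by blast
  moreover have "bounded_chains G0" using grafts_bounded_chains G0(1) by auto
  ultimately obtain u where u: "u \<in> nodes G0" "\<forall>c\<in>?K. tle G0 c u"
    unfolding bounded_chains_def by blast
  then have "?K \<subseteq> insert u (preds G0 u)" unfolding preds_def tle_def by blast
  then show ?thesis using finite_subset graft_finite_preds[OF G0(1) u(1)] by auto
qed

lemma branch_above_supp:
  assumes B: "is_branch H B" and b: "b \<in> B"
  shows "\<exists>c\<in>B \<inter> S. tle H b c"
proof (rule ccontr)
  assume no_supp: "\<not> (\<exists>c\<in>B \<inter> S. tle H b c)"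
  then have "b \<notin> S" using b unfolding tle_def by blast
  moreover have "b \<in> nodes H" using branch_subset[OF B] b by blast
  ultimately obtain G0 where G0: "G0 \<in> skel ` \<phi>" "b \<in> impl G0" unfolding hybr_nodes by blast
  have "finite {w \<in> B. tle H b w}" using branch_tail_finite_in_graft[OF B b G0 no_supp] .
  moreover have "infinite {w \<in> B. tle H b w}"
    using branch_tail_infinite[OF hybr_tree _ B b] hybr_sons_nonempty by blast
  ultimately show False by blast
qed

lemma branch_contains_zero:
  assumes B: "is_branch H B"
  shows "zero T \<in> B"
  using branch_memI[OF B zero_T_in_hybr] zero_hybr_le branch_subset[OF B] by blast

lemma branch_supp_unbounded:
  assumes B: "is_branch H B" and c: "c \<in> B \<inter> S"
  shows "\<exists>c'\<in>B \<inter> S. tlt T c c'"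
proof -
  have "infinite {w \<in> B. tle H c w}"
    using branch_tail_infinite[OF hybr_tree _ B] hybr_sons_nonempty c by blast
  then obtain u where u: "u \<in> B" "tle H c u" "u \<noteq> c"
    using infinite_imp_nonempty[of "{w \<in> B. tle H c w} - {c}"] by auto
  obtain c' where c': "c' \<in> B \<inter> S" "tle H u c'" using branch_above_supp[OF B u(1)] by blast
  have "tlt H c c'" using tree_lt_le_trans[OF hybr_tree _ c'(2)] u unfolding tle_def by blast
  then show ?thesis using hybr_lt_supp_supp_iff[of c' c] c c'(1) by blast
qed

lemma branch_supp_infinite:
  assumes B: "is_branch H B"
  shows "infinite (B \<inter> S)"
proof
  assume fin: "finite (B \<inter> S)"
  have ne: "B \<inter> S \<noteq> {}" using branch_contains_zero[OF B] zero_T_in_supp by blast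
  have "\<exists>m\<in>B \<inter> S. \<forall>s\<in>B \<inter> S. s = m \<or> tlt T s m"
  proof (rule finite_linear_has_greatest[OF fin ne])
    show "tlt T y z \<Longrightarrow> tlt T z w \<Longrightarrow> tlt T y w" for y z w using tree_lt_trans[OF tree] .
    fix y z assume y: "y \<in> B \<inter> S" and z: "z \<in> B \<inter> S"
    have "tle H y z \<or> tle H z y" using branch_chain[OF B] y z by blast
    then show "y = z \<or> tlt T y z \<or> tlt T z y"
      using hybr_lt_supp_supp_iff[of z y] hybr_lt_supp_supp_iff[of y z] y z
      unfolding tle_def by blast
  qed
  then obtain m where m: "m \<in> B \<inter> S" "\<forall>s\<in>B \<inter> S. s = m \<or> tlt T s m" by blast
  obtain c' where c': "c' \<in> B \<inter> S" "tlt T m c'" using branch_supp_unbounded[OF B m(1)] by blast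
  then have "c' = m \<or> tlt T c' m" using m(2) by blast
  then show False using c'(2) tree_lt_irrefl[OF tree] tree_lt_asym[OF tree] by blast
qed

definition supp_trace :: "'a set \<Rightarrow> 'a set" where
  "supp_trace B = {v \<in> nodes T. \<exists>c\<in>B \<inter> S. tle T v c}"

lemma supp_trace_memI: "c \<in> B \<inter> S \<Longrightarrow> c \<in> supp_trace B"
  using supp_in_T unfolding supp_trace_def tle_def by blast

lemma branch_supp_chain: "is_branch H B \<Longrightarrow> is_chain T (B \<inter> S)"
  unfolding is_chain_def
  using branch_chain[of H B] supp_in_T hybr_lt_supp_supp_iff unfolding tle_def by blast

lemma supp_trace_branch:
  assumes B: "is_branch H B"
  shows "is_branch T (supp_trace B)"
proof -
  have ch: "is_chain T (supp_trace B)"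
    using chain_down_closure[OF tree branch_supp_chain[OF B]] unfolding supp_trace_def .
  have "w \<in> supp_trace B" if D: "is_chain T D" "supp_trace B \<subseteq> D" and wD: "w \<in> D" for D w
  proof (rule ccontr)
    assume nw: "w \<notin> supp_trace B"
    have wT: "w \<in> nodes T" using D(1) wD unfolding is_chain_def by blast
    have "B \<inter> S \<subseteq> insert w (preds T w)"
    proof
      fix c assume c: "c \<in> B \<inter> S"
      then have "c \<in> D" using D(2) supp_trace_memI by blast
      then have "tle T w c \<or> tle T c w" using D(1) wD unfolding is_chain_def by blast
      moreover have "\<not> tle T w c" using nw wT c unfolding supp_trace_def by blast
      ultimately show "c \<in> insert w (preds T w)" unfolding tle_def preds_def by blast
    qed
    then show False using branch_supp_infinite[OF B] finite_subset finite_preds[OF wT] by auto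
  qed
  then show ?thesis using ch unfolding is_branch_def by blast
qed

lemma F_leaf_mono: "x \<in> nodes T \<Longrightarrow> y \<in> nodes T \<Longrightarrow> tle T x y \<Longrightarrow> leaf F y \<subseteq> leaf F x"
  using F_nonincreasing skel_F unfolding nonincreasing_def by blast

lemma graft_leaf_mono:
  "G \<in> \<phi> \<Longrightarrow> x \<in> nodes (skel G) \<Longrightarrow> y \<in> nodes (skel G) \<Longrightarrow> tle (skel G) x y \<Longrightarrow>
    leaf G y \<subseteq> leaf G x"
  using graft_nonincreasing unfolding nonincreasing_def by blast

lemma graft_leaf_below_max:
  assumes G: "G \<in> \<phi>" and m: "m \<in> maxs (skel G)" and x: "x \<in> nodes (skel G)" "tlt (skel G) x m"
  shows "leaf F m \<subseteq> leaf G x"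
  using graft_max_leaf[OF G m] graft_leaf_mono[OF G x(1) _, of m] maxsD[OF m] x(2)
  unfolding tle_def by blast

lemma fruit_supp_trace_notin_loss:
  assumes B: "is_branch H B" and p: "p \<in> fruit F (supp_trace B)"
  shows "p \<notin> L"
proof
  have pv: "p \<in> leaf F v" if "v \<in> supp_trace B" for v using p that unfolding fruit_def by blast
  assume "p \<in> L"
  then obtain G where G: "G \<in> \<phi>" "p \<in> cut F G" unfolding loss_def by blast
  have Gs: "skel G \<in> skel ` \<phi>" using G(1) by blast
  define z where "z = zero (skel G)"
  have zT: "z \<in> nodes T" using graft_zero_in_T[OF Gs] z_def by simp
  have pz: "p \<in> leaf F z" "p \<notin> leaf G z" using G(2) unfolding cut_def z_def by auto
  have "z \<in> supp_trace B"
  proof (rule branch_memI[OF supp_trace_branch[OF B] zT], rule ballI)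
    fix u assume u: "u \<in> supp_trace B"
    have "u \<in> nodes T" using u unfolding supp_trace_def by blast
    then show "tle T u z \<or> tle T z u"
      using incomparable_leaves_disjoint[OF F_locally_strict skel_F _ zT] pv[OF u] pz(1) by blast
  qed
  then obtain c where c: "c \<in> B \<inter> S" "tle T z c" unfolding supp_trace_def by blast
  obtain c' where c': "c' \<in> B \<inter> S" "tlt T c c'" using branch_supp_unbounded[OF B c(1)] by blast
  have c'S: "c' \<in> S" using c'(1) by blast
  have "tlt T z c'" using tree_le_lt_trans[OF tree c(2) c'(2)] .
  then obtain m where m: "m \<in> maxs (skel G)" "tle T m c'"
    using supp_above_zero[OF c'S Gs] z_def by blast
  have "m \<in> nodes T" using graft_max_in_T[OF Gs m(1)] by blast
  then have "p \<in> leaf F m"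
    using pv[OF supp_trace_memI[OF c'(1)]] F_leaf_mono[OF _ supp_in_T[OF c'S] m(2)] by blast
  moreover have "leaf F m \<subseteq> leaf G z"
    using graft_leaf_below_max[OF G(1) m(1) graft_zero(1)[OF Gs] max_gt_zero[OF Gs m(1)]] z_def
      by simp
  ultimately show False using pz(2) by blast
qed

lemma fruit_supp_trace_in_fruit_fhybr:
  assumes B: "is_branch H B" and p: "p \<in> fruit F (supp_trace B)"
  shows "p \<in> fruit Hf B"
  unfolding fruit_def
proof
  have pv: "p \<in> leaf F v" if "v \<in> supp_trace B" for v using p that unfolding fruit_def by blast
  have pL: "p \<notin> L" using fruit_supp_trace_notin_loss[OF B p] .
  fix b assume b: "b \<in> B"
  have "b \<in> nodes H" using branch_subset[OF B] b by blast
  then show "p \<in> leaf Hf b"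
  proof (rule hybr_node_cases)
    assume bS: "b \<in> S"
    then show ?thesis using pv[OF supp_trace_memI] b pL leaf_fhybr_supp[OF bS] by blast
  next
    fix E assume E: "E \<in> skel ` \<phi>" "b \<in> impl E"
    then obtain G where G: "G \<in> \<phi>" "E = skel G" by blast
    obtain c where c: "c \<in> B \<inter> S" "tle H b c" using branch_above_supp[OF B b] by blast
    have cS: "c \<in> S" using c(1) by blast
    have "b \<noteq> c" using impl_notin_supp[OF E] cS by blast
    then have "tlt H b c" using c(2) unfolding tle_def by blast
    then obtain m where m: "m \<in> maxs E" "tle T m c" "tlt E b m"
      using hybr_lt_impl_supp_iff[OF cS E] by blast
    have "m \<in> nodes T" using graft_max_in_T[OF E(1) m(1)] by blast
    then have "p \<in> leaf F m"
      using pv[OF supp_trace_memI[OF c(1)]] F_leaf_mono[OF _ supp_in_T[OF cS] m(2)] by blast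
    moreover have "leaf F m \<subseteq> leaf G b"
      using graft_leaf_below_max[OF G(1)] implD[OF E(2)] m(1,3) G(2) by blast
    ultimately show ?thesis using leaf_fhybr_impl[OF G(1)] E(2) G(2) pL by auto
  qed
qed

lemma fruit_fhybr_subset: "fruit Hf B \<subseteq> fruit F (supp_trace B)"
  unfolding fruit_def
proof (intro subsetI INT_I)
  fix q v assume q: "q \<in> (\<Inter>x\<in>B. leaf Hf x)" and v: "v \<in> supp_trace B"
  obtain c where c: "c \<in> B \<inter> S" "tle T v c" using v unfolding supp_trace_def by blast
  have cS: "c \<in> S" using c(1) by blast
  have "q \<in> leaf F c" using q c(1) leaf_fhybr_supp[OF cS] by blast
  moreover have "v \<in> nodes T" using v unfolding supp_trace_def by blast
  ultimately show "q \<in> leaf F v" using F_leaf_mono[OF _ supp_in_T[OF cS] c(2)] by blast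
qed

lemma fhybr_branch_fruit:
  assumes B: "is_branch H B"
  shows "\<exists>p. fruit Hf B = {p}"
proof -
  have "is_branch (skel F) (supp_trace B)" using supp_trace_branch[OF B] skel_F by simp
  then obtain p where p: "fruit F (supp_trace B) = {p}"
    using F_strict_branches unfolding strict_branches_def by blast
  then have "fruit Hf B = {p}"
    using fruit_supp_trace_in_fruit_fhybr[OF B] fruit_fhybr_subset by blast
  then show ?thesis by blast
qed

lemma fhybr_strict_branches: "strict_branches Hf"
  unfolding strict_branches_def skel_fhybr
  using zero_T_in_hybr fhybr_branch_fruit by blast

lemma baire_ftree_fhybr: "baire_ftree (subtopology X (topspace X - L)) Hf"
  unfolding baire_ftree_def is_ftree_def skel_fhybr
  using hybr_tree hybr_baire_skeleton fhybr_open fhybr_locally_strict fhybr_strict_branches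
    fhybr_root_leaf skel_fhybr by simp

end

lemma foliage_hybridI:
  assumes F: "baire_ftree X F" and \<phi>: "consistent_fgrafts F \<phi>"
    and grafts: "\<forall>G\<in>\<phi>. aleph0_branching (skel G) \<and> locally_strict G \<and> open_in X G \<and>
                 bounded_chains (skel G) \<and> height_le_omega (skel G)"
  shows "foliage_hybrid (skel F) \<phi> F X"
proof unfold_locales
  show "is_tree (skel F)" "baire_skeleton (skel F)"
    using F unfolding baire_ftree_def is_ftree_def by blast+
  show "consistent_grafts (skel F) (skel ` \<phi>)" "inj_on skel \<phi>" "G \<in> \<phi> \<Longrightarrow> is_fgraft F G" for G
    using \<phi> unfolding consistent_fgrafts_def by blast+
qed (use F grafts in auto)

theorem mainTheorem11:
  fixes X :: "'b topology"
    and F :: "('a, 'b) ftree"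
    and \<phi> :: "('a, 'b) ftree set"
  assumes "baire_ftree X F"
    and "consistent_fgrafts F \<phi>"
    and "\<forall>G\<in>\<phi>. aleph0_branching (skel G) \<and> locally_strict G \<and> open_in X G \<and>
                 bounded_chains (skel G) \<and> height_le_omega (skel G)"
  shows "baire_ftree (subtopology X (topspace X - loss F \<phi>)) (fhybr F \<phi>)"
proof -
  interpret foliage_hybrid "skel F" \<phi> F X using foliage_hybridI[OF assms] .
  show ?thesis by (rule baire_ftree_fhybr)
qed

end
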